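(* Let $X$ be a compact nonpositively curved cube complex and $(\tilde Y,\phi)$ a quasiline in $\tilde X$. Then: (1) there is a constant $D$ such that $\operatorname{diam}(H)\le D$ for every hyperplane $H$ of $\tilde Y$ that is not trivial; (2) there is a constant $K$ such that for every half-essential hyperplane $H$ of $\tilde Y$, its shallow halfspace $H^\epsilon$ satisfies $\operatorname{diam}(H^\epsilon)\le K$; (3) there is an integer $d$ such that for every essential hyperplane $H$ of $\tilde Y$, the hyperplanes $H$ and $\phi^d(H)$ do not intersect, and every hyperplane of $\tilde Y$ crossing both of them is trivial; (4) $\tilde Y$ has only finitely many trivial hyperplanes. The constants $K,D,d$ depend only on $(\tilde Y,\phi)$. Moreover, any constants $\overline D\ge D$, $\overline K\ge K$ and any integer $\overline d\ge d$ also satisfy (1), (2), (3) respectively.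
   Context: $\tilde X$ is the universal cover of $X$. A quasiline in $\tilde X$ is a pair $(\tilde Y,\phi)$ with $\tilde Y\subset\tilde X$ a convex subcomplex and $\phi\in\pi_1X$ nontrivial such that $\langle\phi\rangle$ acts cocompactly on $\tilde Y$. Hyperplanes of $\tilde Y$ and their halfspaces are taken in the CAT(0) cube complex $\tilde Y$. A halfspace of $H$ is deep if it contains points arbitrarily far from $H$, shallow otherwise. $H$ is essential if both halfspaces are deep, trivial if both are shallow, half-essential if exactly one is deep. *)

theory Defs
  imports Complex_Main
begin

text \<open>CAT(0) cube complexes are modelled combinatorially through their 1-skeleta,
  which are exactly the median graphs (Chepoi, Roller). Vertices form the type 'v,
  adjacency is adj, and all distances are combinatorial (graph) distances.\<close>

definition walk :: "('v \<Rightarrow> 'v \<Rightarrow> bool) \<Rightarrow> 'v \<Rightarrow> 'v \<Rightarrow> nat \<Rightarrow> bool" where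
  "walk adj x y n \<longleftrightarrow>
     (\<exists>p::nat \<Rightarrow> 'v. p 0 = x \<and> p n = y \<and> (\<forall>i<n. adj (p i) (p (Suc i))))"

definition gdist :: "('v \<Rightarrow> 'v \<Rightarrow> bool) \<Rightarrow> 'v \<Rightarrow> 'v \<Rightarrow> nat" where
  "gdist adj x y = (LEAST n. walk adj x y n)"

definition simple_graph :: "('v \<Rightarrow> 'v \<Rightarrow> bool) \<Rightarrow> bool" where
  "simple_graph adj \<longleftrightarrow> (\<forall>x y. adj x y \<longrightarrow> adj y x) \<and> (\<forall>x. \<not> adj x x)"

definition connected_graph :: "('v \<Rightarrow> 'v \<Rightarrow> bool) \<Rightarrow> bool" where
  "connected_graph adj \<longleftrightarrow> (\<forall>x y. \<exists>n. walk adj x y n)"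

definition interval :: "('v \<Rightarrow> 'v \<Rightarrow> bool) \<Rightarrow> 'v \<Rightarrow> 'v \<Rightarrow> 'v set" where
  "interval adj x y = {z. gdist adj x z + gdist adj z y = gdist adj x y}"

definition median_graph :: "('v \<Rightarrow> 'v \<Rightarrow> bool) \<Rightarrow> bool" where
  "median_graph adj \<longleftrightarrow> simple_graph adj \<and> connected_graph adj \<and>
     (\<forall>x y z. \<exists>!m. m \<in> interval adj x y \<inter> interval adj y z \<inter> interval adj x z)"

definition locally_finite :: "('v \<Rightarrow> 'v \<Rightarrow> bool) \<Rightarrow> bool" where
  "locally_finite adj \<longleftrightarrow> (\<forall>v. finite {w. adj v w})"

definition graph_aut :: "('v \<Rightarrow> 'v \<Rightarrow> bool) \<Rightarrow> ('v \<Rightarrow> 'v) \<Rightarrow> bool" where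
  "graph_aut adj g \<longleftrightarrow> bij g \<and> (\<forall>x y. adj (g x) (g y) \<longleftrightarrow> adj x y)"

text \<open>A group of automorphisms (the deck group, i.e. pi_1 X acting on the universal cover).\<close>
definition aut_group :: "('v \<Rightarrow> 'v \<Rightarrow> bool) \<Rightarrow> ('v \<Rightarrow> 'v) set \<Rightarrow> bool" where
  "aut_group adj G \<longleftrightarrow> id \<in> G \<and> (\<forall>g\<in>G. \<forall>h\<in>G. g \<circ> h \<in> G) \<and> (\<forall>g\<in>G. inv g \<in> G)
     \<and> (\<forall>g\<in>G. graph_aut adj g)"

text \<open>Free action on the cube complex: no nontrivial element fixes a point, equivalently
  no nontrivial element stabilises a nonempty finite set of vertices (e.g. a cube).\<close>
definition acts_freely :: "('v \<Rightarrow> 'v) set \<Rightarrow> bool" where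
  "acts_freely G \<longleftrightarrow>
     (\<forall>g\<in>G. g \<noteq> id \<longrightarrow> (\<forall>S. finite S \<and> S \<noteq> {} \<longrightarrow> g ` S \<noteq> S))"

definition finitely_many_orbits :: "('v \<Rightarrow> 'v) set \<Rightarrow> 'v set \<Rightarrow> bool" where
  "finitely_many_orbits G S \<longleftrightarrow>
     (\<exists>F. finite F \<and> F \<subseteq> S \<and> S \<subseteq> (\<Union>f\<in>F. (\<lambda>g. g f) ` G))"

text \<open>The universal cover of a compact nonpositively curved cube complex X, together
  with the action of pi_1 X by deck transformations: a locally finite CAT(0) cube complex
  with a free cocompact action.\<close>
definition univ_cover_of_compact_npc :: "('v \<Rightarrow> 'v \<Rightarrow> bool) \<Rightarrow> ('v \<Rightarrow> 'v) set \<Rightarrow> bool" where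
  "univ_cover_of_compact_npc adj G \<longleftrightarrow> median_graph adj \<and> locally_finite adj \<and>
     aut_group adj G \<and> acts_freely G \<and> finitely_many_orbits G UNIV"

definition convex_set :: "('v \<Rightarrow> 'v \<Rightarrow> bool) \<Rightarrow> 'v set \<Rightarrow> bool" where
  "convex_set adj Y \<longleftrightarrow> (\<forall>x\<in>Y. \<forall>y\<in>Y. interval adj x y \<subseteq> Y)"

definition fpow :: "('v \<Rightarrow> 'v) \<Rightarrow> int \<Rightarrow> ('v \<Rightarrow> 'v)" where
  "fpow g k = (if 0 \<le> k then g ^^ nat k else inv g ^^ nat (- k))"

definition cyclic_subgroup :: "('v \<Rightarrow> 'v) \<Rightarrow> ('v \<Rightarrow> 'v) set" where
  "cyclic_subgroup g = range (fpow g)"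

text \<open>Quasiline (Y, phi): Y convex subcomplex (given by its convex vertex set),
  phi nontrivial in pi_1 X, and the cyclic group generated by phi acts cocompactly on Y.\<close>
definition quasiline :: "('v \<Rightarrow> 'v \<Rightarrow> bool) \<Rightarrow> ('v \<Rightarrow> 'v) set \<Rightarrow> 'v set \<Rightarrow> ('v \<Rightarrow> 'v) \<Rightarrow> bool" where
  "quasiline adj G Y \<phi> \<longleftrightarrow> convex_set adj Y \<and> \<phi> \<in> G \<and> \<phi> \<noteq> id \<and> \<phi> ` Y = Y \<and>
     finitely_many_orbits (cyclic_subgroup \<phi>) Y"

definition edges_in :: "('v \<Rightarrow> 'v \<Rightarrow> bool) \<Rightarrow> 'v set \<Rightarrow> ('v \<times> 'v) set" where
  "edges_in adj Y = {(a, b). a \<in> Y \<and> b \<in> Y \<and> adj a b}"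

text \<open>Djokovic--Winkler relation: oriented edges dual to the same hyperplane.\<close>
definition theta :: "('v \<Rightarrow> 'v \<Rightarrow> bool) \<Rightarrow> 'v \<times> 'v \<Rightarrow> 'v \<times> 'v \<Rightarrow> bool" where
  "theta adj e f \<longleftrightarrow>
     gdist adj (fst e) (fst f) + gdist adj (snd e) (snd f) \<noteq>
     gdist adj (fst e) (snd f) + gdist adj (snd e) (fst f)"

text \<open>Hyperplanes of the cube complex spanned by Y, as the sets of (oriented) edges they cross.\<close>
definition hyperplanes :: "('v \<Rightarrow> 'v \<Rightarrow> bool) \<Rightarrow> 'v set \<Rightarrow> ('v \<times> 'v) set set" where
  "hyperplanes adj Y = {{f \<in> edges_in adj Y. theta adj e f} | e. e \<in> edges_in adj Y}"

definition halfspace :: "('v \<Rightarrow> 'v \<Rightarrow> bool) \<Rightarrow> 'v set \<Rightarrow> 'v \<times> 'v \<Rightarrow> 'v set" where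
  "halfspace adj Y e = {z \<in> Y. gdist adj z (fst e) < gdist adj z (snd e)}"

definition halfspaces :: "('v \<Rightarrow> 'v \<Rightarrow> bool) \<Rightarrow> 'v set \<Rightarrow> ('v \<times> 'v) set \<Rightarrow> 'v set set" where
  "halfspaces adj Y H = halfspace adj Y ` H"

definition carrier :: "('v \<times> 'v) set \<Rightarrow> 'v set" where
  "carrier H = fst ` H"

definition deep :: "('v \<Rightarrow> 'v \<Rightarrow> bool) \<Rightarrow> 'v set \<Rightarrow> ('v \<times> 'v) set \<Rightarrow> bool" where
  "deep adj W H \<longleftrightarrow> (\<forall>R::nat. \<exists>z\<in>W. \<forall>c\<in>carrier H. R \<le> gdist adj z c)"

definition essential_hyp :: "('v \<Rightarrow> 'v \<Rightarrow> bool) \<Rightarrow> 'v set \<Rightarrow> ('v \<times> 'v) set \<Rightarrow> bool" where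
  "essential_hyp adj Y H \<longleftrightarrow> (\<forall>W\<in>halfspaces adj Y H. deep adj W H)"

definition trivial_hyp :: "('v \<Rightarrow> 'v \<Rightarrow> bool) \<Rightarrow> 'v set \<Rightarrow> ('v \<times> 'v) set \<Rightarrow> bool" where
  "trivial_hyp adj Y H \<longleftrightarrow> (\<forall>W\<in>halfspaces adj Y H. \<not> deep adj W H)"

definition half_essential_hyp :: "('v \<Rightarrow> 'v \<Rightarrow> bool) \<Rightarrow> 'v set \<Rightarrow> ('v \<times> 'v) set \<Rightarrow> bool" where
  "half_essential_hyp adj Y H \<longleftrightarrow>
     (\<exists>W\<in>halfspaces adj Y H. deep adj W H) \<and> (\<exists>W\<in>halfspaces adj Y H. \<not> deep adj W H)"

definition diam_le :: "('v \<Rightarrow> 'v \<Rightarrow> bool) \<Rightarrow> 'v set \<Rightarrow> real \<Rightarrow> bool" where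
  "diam_le adj S D \<longleftrightarrow> (\<forall>x\<in>S. \<forall>y\<in>S. real (gdist adj x y) \<le> D)"

definition crosses :: "('v \<Rightarrow> 'v \<Rightarrow> bool) \<Rightarrow> 'v set \<Rightarrow> ('v \<times> 'v) set \<Rightarrow> ('v \<times> 'v) set \<Rightarrow> bool" where
  "crosses adj Y H H' \<longleftrightarrow>
     (\<forall>W\<in>halfspaces adj Y H. \<forall>W'\<in>halfspaces adj Y H'. W \<inter> W' \<noteq> {})"

definition hyp_intersect :: "('v \<Rightarrow> 'v \<Rightarrow> bool) \<Rightarrow> 'v set \<Rightarrow> ('v \<times> 'v) set \<Rightarrow> ('v \<times> 'v) set \<Rightarrow> bool" where
  "hyp_intersect adj Y H H' \<longleftrightarrow> H = H' \<or> crosses adj Y H H'"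

definition hyp_image :: "('v \<Rightarrow> 'v) \<Rightarrow> ('v \<times> 'v) set \<Rightarrow> ('v \<times> 'v) set" where
  "hyp_image g H = map_prod g g ` H"

end

(* The 1-skeleton of the cube complex is a median graph, in which the set W (a, b) of vertices
   closer to a than to b is convex for every edge ab (a geodesic leaving W (a, b) has a vertex
   farthest from a, and the quadrangle condition pushes it towards a).  Consequently the
   hyperplanes of Y are the Djokovic-Winkler classes of edges, each with exactly two halfspaces,
   and any geodesic between the two halfspaces meets the carrier.

   As phi acts freely and cocompactly on Y, every hyperplane of Y is a translate phi^n H0 of
   one of finitely many hyperplanes H0 meeting a fixed ball around a base point x0.  A hyperplane
   is trivial iff its carrier is unbounded: an unbounded carrier comes near infinitely many
   orbit points, so the hyperplane is stabilised by some phi^m, and then all of Y is near its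
   carrier.  Taking maxima over the finitely many H0 gives (1) and (2); (4) holds because each
   trivial H0 has finitely many translates.  For (3), take an orbit point b near an essential H:
   the translates phi^n b with n >= N lie in one halfspace of H and those with n <= -N in the
   other, so for large d the carrier of phi^d H lies in a single halfspace of H, whence H and
   phi^d H are disjoint; a hyperplane crossing both has carrier points near b and near phi^d b,
   so its carrier is longer than the bound of (1) and the hyperplane is trivial. *)

theory Submission
  imports Defs
begin

lemma walk_0: "walk adj x x 0"
  unfolding walk_def by (rule exI[of _ "\<lambda>_. x"]) auto

lemma walk_0_iff: "walk adj x y 0 \<longleftrightarrow> x = y"
  unfolding walk_def by auto

lemma walk_1_iff: "walk adj x y 1 \<longleftrightarrow> adj x y"
  unfolding walk_def by (auto intro!: exI[of _ "\<lambda>i. if i = 0 then x else y"])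

lemma walk_append_path:
  assumes "walk adj x y m" "walk adj y z n"
  shows "\<exists>p. p 0 = x \<and> p m = y \<and> p (m + n) = z \<and> (\<forall>i<m + n. adj (p i) (p (Suc i)))"
proof -
  obtain p where p: "p 0 = x" "p m = y" "\<forall>i<m. adj (p i) (p (Suc i))"
    using assms(1) unfolding walk_def by blast
  obtain q where q: "q 0 = y" "q n = z" "\<forall>i<n. adj (q i) (q (Suc i))"
    using assms(2) unfolding walk_def by blast
  define r where "r i = (if i \<le> m then p i else q (i - m))" for i
  have steps: "adj (r i) (r (Suc i))" if "i < m + n" for i
  proof (cases "i < m")
    case True
    then show ?thesis using p(3) by (simp add: r_def)
  next
    case False
    then have "Suc i - m = Suc (i - m)" by auto
    then show ?thesis using False p(2) q(1,3) that by (cases "i = m") (auto simp: r_def)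
  qed
  have "r 0 = x" "r m = y" "r (m + n) = z"
    using p(1,2) q(1,2) by (auto simp: r_def)
  with steps show ?thesis by blast
qed

lemma walk_append: "walk adj x y m \<Longrightarrow> walk adj y z n \<Longrightarrow> walk adj x z (m + n)"
  by (drule (1) walk_append_path) (auto simp: walk_def)

lemma walk_reverse:
  assumes "\<And>x y. adj x y \<Longrightarrow> adj y x" "walk adj x y n" shows "walk adj y x n"
proof -
  obtain p where p: "p 0 = x" "p n = y" "\<forall>i<n. adj (p i) (p (Suc i))"
    using assms(2) unfolding walk_def by blast
  have rev: "adj (p (n - i)) (p (n - Suc i))" if "i < n" for i
  proof -
    have k: "n - Suc i < n" "Suc (n - Suc i) = n - i" using that by arith+
    show ?thesis using p(3)[rule_format, OF k(1)] unfolding k(2) by (rule assms(1))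
  qed
  show ?thesis
    unfolding walk_def using p(1,2) rev by (intro exI[of _ "\<lambda>i. p (n - i)"] conjI allI impI) simp_all
qed

lemma walk_Suc_lastE:
  assumes "walk adj x y (Suc n)" obtains y' where "walk adj x y' n" "adj y' y"
proof -
  obtain p where p: "p 0 = x" "p (Suc n) = y" "\<forall>i<Suc n. adj (p i) (p (Suc i))"
    using assms unfolding walk_def by blast
  have "walk adj x (p n) n" unfolding walk_def using p by (intro exI[of _ p]) auto
  with p that show ?thesis by auto
qed

lemma exists_strict_local_max:
  fixes g :: "nat \<Rightarrow> 'a::linorder"
  assumes no_flat: "\<And>j. j < n \<Longrightarrow> g j \<noteq> g (Suc j)"
    and up: "g 0 < g 1" and down: "g n < g (n - 1)"
  shows "\<exists>i. 0 < i \<and> i < n \<and> g (i - 1) < g i \<and> g (Suc i) < g i"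
proof -
  define P where "P i \<longleftrightarrow> 0 < i \<and> i < n \<and> g (Suc i) < g i" for i
  have "n \<noteq> 0" using down by (cases n) auto
  moreover have "n \<noteq> 1" using up down by auto
  ultimately have "2 \<le> n" by arith
  then have "P (n - 1)" unfolding P_def using down by simp
  define i where "i = (LEAST i. P i)"
  have i: "P i" unfolding i_def by (rule LeastI) fact
  have "g (i - 1) < g i"
  proof (cases "i = 1")
    case False
    have i1: "0 < i - 1" "i - 1 < n" "Suc (i - 1) = i" using i False unfolding P_def by auto
    have "\<not> P (i - 1)" using not_less_Least[of "i - 1" P] i1(1) unfolding i_def by simp
    then have "g (i - 1) \<le> g i" using i1 unfolding P_def by (simp add: not_less)
    moreover have "g (i - 1) \<noteq> g i" using no_flat[OF i1(2)] unfolding i1(3) .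
    ultimately show ?thesis by (rule le_neq_trans)
  qed (use up in simp)
  then show ?thesis using i unfolding P_def by blast
qed

lemma sum_Suc_segment_less:
  fixes f :: "nat \<Rightarrow> nat"
  assumes "j0 \<le> j1" "j1 \<le> n" "(j0, j1) \<noteq> (0, n)"
  shows "(\<Sum>k\<le>j1 - j0. Suc (f (j0 + k))) < (\<Sum>j\<le>n. Suc (f j))"
proof -
  have "(\<Sum>k\<le>j1 - j0. Suc (f (j0 + k))) = (\<Sum>j\<in>{j0..j1}. Suc (f j))"
    using assms(1) by (intro sum.reindex_bij_witness[of _ "\<lambda>j. j - j0" "\<lambda>k. j0 + k"]) auto
  also have "\<dots> < (\<Sum>j\<le>n. Suc (f j))"
  proof -
    obtain k where k: "k \<le> n" "k \<notin> {j0..j1}"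
      using assms by (cases "j0 = 0") (auto intro: that[of n] that[of 0])
    have "(\<Sum>j\<le>n. Suc (f j)) = (\<Sum>j\<in>{..n} - {j0..j1}. Suc (f j)) + (\<Sum>j\<in>{j0..j1}. Suc (f j))"
      using assms(2) by (intro sum.subset_diff) auto
    moreover have "0 < (\<Sum>j\<in>{..n} - {j0..j1}. Suc (f j))"
      using k by (intro sum_pos2[of _ k]) auto
    ultimately show ?thesis by linarith
  qed
  finally show ?thesis .
qed

lemma finite_uniform_bound:
  fixes Q :: "'a \<Rightarrow> 'b::linorder \<Rightarrow> bool"
  assumes "finite S" "\<And>s. s \<in> S \<Longrightarrow> \<exists>K. Q s K" "\<And>s K K'. Q s K \<Longrightarrow> K \<le> K' \<Longrightarrow> Q s K'"
  shows "\<exists>K. \<forall>s\<in>S. Q s K"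
proof (cases "S = {}")
  case False
  define k where "k s = (SOME K. Q s K)" for s
  have "Q s (k s)" if "s \<in> S" for s unfolding k_def using assms(2)[OF that] by (rule someI_ex)
  moreover have "k s \<le> Max (k ` S)" if "s \<in> S" for s using assms(1) that by simp
  ultimately show ?thesis using assms(3) by blast
qed simp

lemma finite_int_set_bounded:
  assumes "finite (S :: int set)" shows "\<exists>N\<ge>0. \<forall>n\<in>S. \<bar>n\<bar> < N"
proof -
  have "\<exists>N. \<forall>n\<in>S. \<bar>n\<bar> < N"
    by (rule finite_uniform_bound[OF assms]) (auto intro: gt_ex)
  then obtain N where "\<forall>n\<in>S. \<bar>n\<bar> < N" by blast
  then show ?thesis by (intro exI[of _ "max N 0"]) auto
qed

lemma periodic_int_range:
  fixes f :: "int \<Rightarrow> 'a"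
  assumes m: "m \<noteq> 0" and periodic: "\<And>n. f (n + m) = f n"
  shows "range f = f ` {0..<\<bar>m\<bar>}"
proof -
  have multiple: "f (n + q * m) = f n" for n q
  proof (induction q rule: int_induct[where k = 0])
    case (step1 q)
    then show ?case using periodic[of "n + q * m"] by (simp add: algebra_simps)
  next
    case (step2 q)
    then show ?case using periodic[of "n + (q - 1) * m"] by (simp add: algebra_simps)
  qed simp
  have "f n \<in> f ` {0..<\<bar>m\<bar>}" for n
  proof -
    have "\<bar>m\<bar> = sgn m * m" by (simp add: abs_sgn mult.commute)
    then have "n div \<bar>m\<bar> * \<bar>m\<bar> = (n div \<bar>m\<bar> * sgn m) * m" by (simp only: mult.assoc)
    then have "n = n mod \<bar>m\<bar> + (n div \<bar>m\<bar> * sgn m) * m"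
      using mod_div_mult_eq[of n "\<bar>m\<bar>"] by linarith
    then have "f n = f (n mod \<bar>m\<bar>)" using multiple by metis
    then show ?thesis using m by simp
  qed
  then show ?thesis by auto
qed

lemma graph_aut_bij: "graph_aut adj g \<Longrightarrow> bij g"
  unfolding graph_aut_def by simp

lemma graph_aut_id: "graph_aut adj id"
  unfolding graph_aut_def by simp

lemma graph_aut_comp: "graph_aut adj f \<Longrightarrow> graph_aut adj g \<Longrightarrow> graph_aut adj (f \<circ> g)"
  unfolding graph_aut_def by (simp add: bij_comp)

lemma graph_aut_inv:
  assumes "graph_aut adj g" shows "graph_aut adj (inv g)"
proof -
  have b: "bij g" using assms by (rule graph_aut_bij)
  have "adj (inv g x) (inv g y) \<longleftrightarrow> adj x y" for x y
    using assms bij_inv_eq_iff[OF b] unfolding graph_aut_def by metis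
  then show ?thesis unfolding graph_aut_def using bij_imp_bij_inv[OF b] by simp
qed

lemma gdist_graph_aut:
  assumes g: "graph_aut adj g" shows "gdist adj (g x) (g y) = gdist adj x y"
proof -
  have walk: "walk adj (h x) (h y) n" if h: "graph_aut adj h" and w: "walk adj x y n" for h x y n
  proof -
    obtain p where "p 0 = x" "p n = y" "\<forall>i<n. adj (p i) (p (Suc i))"
      using w unfolding walk_def by blast
    then show ?thesis using h unfolding walk_def graph_aut_def
      by (intro exI[of _ "h \<circ> p"]) simp
  qed
  have "walk adj (g x) (g y) n \<longleftrightarrow> walk adj x y n" for n
    using walk[OF graph_aut_inv[OF g], of "g x" "g y" n] walk[OF g, of x y n] graph_aut_bij[OF g]
    by (auto simp: bij_is_inj)
  then have "walk adj (g x) (g y) = walk adj x y" by (rule ext)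
  then show ?thesis unfolding gdist_def by simp
qed

lemma theta_graph_aut:
  "graph_aut adj g \<Longrightarrow> theta adj (map_prod g g e) (map_prod g g f) = theta adj e f"
  unfolding theta_def by (simp add: gdist_graph_aut)

lemma diam_le_graph_aut: "graph_aut adj g \<Longrightarrow> diam_le adj (g ` S) D \<longleftrightarrow> diam_le adj S D"
  unfolding diam_le_def by (simp add: gdist_graph_aut)

lemma diam_le_mono: "diam_le adj S D \<Longrightarrow> D \<le> D' \<Longrightarrow> diam_le adj S D'"
  unfolding diam_le_def by (meson order.trans)

lemma diam_le_of_nat: "(\<And>x y. x \<in> S \<Longrightarrow> y \<in> S \<Longrightarrow> gdist adj x y \<le> D) \<Longrightarrow> diam_le adj S (real D)"
  unfolding diam_le_def by simp

lemma edges_inD: "e \<in> edges_in adj Y \<Longrightarrow> adj (fst e) (snd e) \<and> fst e \<in> Y \<and> snd e \<in> Y"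
  unfolding edges_in_def by auto

lemma edges_in_graph_aut:
  assumes g: "graph_aut adj g" and gY: "g ` Y = Y"
  shows "map_prod g g e \<in> edges_in adj Y \<longleftrightarrow> e \<in> edges_in adj Y"
proof -
  have "g a \<in> Y \<longleftrightarrow> a \<in> Y" for a
    using gY bij_is_inj[OF graph_aut_bij[OF g]] by (metis image_eqI inj_image_mem_iff)
  then show ?thesis using g unfolding edges_in_def graph_aut_def by (cases e) auto
qed

lemma hyp_image_comp: "hyp_image (f \<circ> g) H = hyp_image f (hyp_image g H)"
  unfolding hyp_image_def by (simp add: image_comp map_prod.comp)

lemma carrier_hyp_image: "carrier (hyp_image g H) = g ` carrier H"
  unfolding carrier_def hyp_image_def by (simp add: image_image)

lemma halfspace_graph_aut:
  assumes g: "graph_aut adj g" and gY: "g ` Y = Y"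
  shows "halfspace adj Y (map_prod g g e) = g ` halfspace adj Y e"
proof -
  have "halfspace adj Y (map_prod g g e) = {z \<in> g ` Y. gdist adj z (g (fst e)) < gdist adj z (g (snd e))}"
    unfolding halfspace_def using gY by (cases e) auto
  also have "\<dots> = g ` halfspace adj Y e"
    unfolding halfspace_def by (auto simp: gdist_graph_aut[OF g])
  finally show ?thesis .
qed

lemma halfspaces_hyp_image:
  "graph_aut adj g \<Longrightarrow> g ` Y = Y \<Longrightarrow> halfspaces adj Y (hyp_image g H) = (\<lambda>W. g ` W) ` halfspaces adj Y H"
  unfolding halfspaces_def hyp_image_def image_comp by (simp add: halfspace_graph_aut comp_def)

lemma deep_hyp_image: "graph_aut adj g \<Longrightarrow> deep adj (g ` S) (hyp_image g H) \<longleftrightarrow> deep adj S H"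
  unfolding deep_def carrier_hyp_image by (simp add: gdist_graph_aut)

lemma trivial_hyp_image:
  "graph_aut adj g \<Longrightarrow> g ` Y = Y \<Longrightarrow> trivial_hyp adj Y (hyp_image g H) \<longleftrightarrow> trivial_hyp adj Y H"
  unfolding trivial_hyp_def by (simp add: halfspaces_hyp_image deep_hyp_image)

lemma half_essential_hyp_image:
  "graph_aut adj g \<Longrightarrow> g ` Y = Y \<Longrightarrow> half_essential_hyp adj Y (hyp_image g H) \<longleftrightarrow> half_essential_hyp adj Y H"
  unfolding half_essential_hyp_def by (simp add: halfspaces_hyp_image deep_hyp_image)

lemma fpow_0 [simp]: "fpow g 0 = id"
  unfolding fpow_def by simp

lemma fpow_1 [simp]: "fpow g 1 = g"
  unfolding fpow_def by simp

lemma fpow_plus_1: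
  assumes "bij g" shows "fpow g (k + 1) = g \<circ> fpow g k"
proof -
  have gi: "g \<circ> inv g = id" using surj_iff bij_is_surj[OF assms] by blast
  show ?thesis
  proof (cases "0 \<le> k")
    case True
    then have "nat (k + 1) = Suc (nat k)" by simp
    then show ?thesis using True unfolding fpow_def by simp
  next
    case False
    show ?thesis
    proof (cases "k = - 1")
      case True
      then show ?thesis unfolding fpow_def using gi by simp
    next
      case False2: False
      then have "nat (- k) = Suc (nat (- (k + 1)))" using False by simp
      then have "fpow g k = inv g \<circ> fpow g (k + 1)" unfolding fpow_def using False False2 by simp
      then show ?thesis using gi by (simp add: comp_assoc[symmetric])
    qed
  qed
qed

lemma fpow_add:
  assumes "bij g" shows "fpow g (a + b) = fpow g a \<circ> fpow g b"
proof (induction a rule: int_induct[where k = 0])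
  case (step1 i)
  then show ?case using fpow_plus_1[OF assms, of "i + b"] fpow_plus_1[OF assms, of i]
    by (simp add: algebra_simps comp_assoc)
next
  case (step2 i)
  have "inv g \<circ> g = id" using inj_iff bij_is_inj[OF assms] by blast
  then have minus_1: "fpow g (k - 1) = inv g \<circ> fpow g k" for k
    using fpow_plus_1[OF assms, of "k - 1"] by (simp add: comp_assoc[symmetric])
  show ?case using step2 minus_1[of "i + b"] minus_1[of i] by (simp add: algebra_simps comp_assoc)
qed simp

lemma fpow_add_apply: "bij g \<Longrightarrow> fpow g (a + b) x = fpow g a (fpow g b x)"
  by (simp add: fpow_add)

lemma fpow_neg_apply: "bij g \<Longrightarrow> fpow g (- a) (fpow g a x) = x"
  using fpow_add_apply[of g "- a" a x] by simp

lemma fpow_apply_neg: "bij g \<Longrightarrow> fpow g a (fpow g (- a) x) = x"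
  using fpow_add_apply[of g a "- a" x] by simp

lemma graph_aut_fpow:
  assumes "graph_aut adj g" shows "graph_aut adj (fpow g n)"
proof -
  have pow: "graph_aut adj (f ^^ k)" if "graph_aut adj f" for f k
    by (induction k) (use graph_aut_id graph_aut_comp that in \<open>simp_all only: funpow.simps\<close>)
  show ?thesis unfolding fpow_def using pow[OF assms] pow[OF graph_aut_inv[OF assms]] by simp
qed

lemma fpow_image_eq:
  assumes "bij g" "g ` Y = Y" shows "fpow g n ` Y = Y"
proof -
  have "inv g ` Y = Y" using assms by (metis bij_is_inj image_inv_f_f)
  moreover have "(f ^^ k) ` Y = Y" if "f ` Y = Y" for f k
  proof (induction k)
    case (Suc k)
    then show ?case by (simp only: funpow.simps(2) image_comp[symmetric] that)
  qed simp
  ultimately show ?thesis unfolding fpow_def using assms(2) by simp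
qed

locale cat0_cube_complex =
  fixes adj :: "'v \<Rightarrow> 'v \<Rightarrow> bool"
  assumes median: "median_graph adj"
begin

abbreviation d :: "'v \<Rightarrow> 'v \<Rightarrow> nat" where "d \<equiv> gdist adj"

lemma adj_sym: "adj x y \<Longrightarrow> adj y x"
  using median unfolding median_graph_def simple_graph_def by blast

lemma adj_irrefl: "\<not> adj x x"
  using median unfolding median_graph_def simple_graph_def by blast

lemma walk_gdist: "walk adj x y (d x y)"
proof -
  have "\<exists>n. walk adj x y n" using median unfolding median_graph_def connected_graph_def by blast
  then show ?thesis unfolding gdist_def by (rule LeastI_ex)
qed

lemma gdist_le_walk: "walk adj x y n \<Longrightarrow> d x y \<le> n"
  unfolding gdist_def by (rule Least_le)

lemma gdist_eq_0_iff [simp]: "d x y = 0 \<longleftrightarrow> x = y"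
  using walk_gdist[of x y] gdist_le_walk[OF walk_0, of x] by (auto simp: walk_0_iff)

lemma gdist_self [simp]: "d x x = 0"
  by simp

lemma gdist_commute: "d x y = d y x"
  using gdist_le_walk[OF walk_reverse[OF adj_sym walk_gdist]] by (metis le_antisym)

lemma gdist_triangle: "d x y \<le> d x z + d z y"
  using gdist_le_walk[OF walk_append[OF walk_gdist walk_gdist]] .

lemma gdist_eq_1_iff: "d x y = 1 \<longleftrightarrow> adj x y"
proof
  assume a: "adj x y"
  have "d x y \<le> 1" using gdist_le_walk[OF walk_1_iff[of adj x y, THEN iffD2, OF a]] .
  moreover have "x \<noteq> y" using a adj_irrefl by blast
  ultimately show "d x y = 1" using gdist_eq_0_iff[of x y] by linarith
next
  assume "d x y = 1"
  then show "adj x y" using walk_gdist[of x y] walk_1_iff by metis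
qed

lemma gdist_adj: "adj x y \<Longrightarrow> d x y = 1"
  using gdist_eq_1_iff by blast

lemma gdist_adj_le:
  assumes "adj x y" shows "d y z \<le> d x z + 1"
  using gdist_triangle[of y z x] gdist_adj[OF adj_sym[OF assms]] by simp

lemma mem_interval: "z \<in> interval adj x y \<longleftrightarrow> d x z + d z y = d x y"
  unfolding interval_def by simp

lemma median_exists: "\<exists>m. d x m + d m y = d x y \<and> d y m + d m z = d y z \<and> d x m + d m z = d x z"
  using median unfolding median_graph_def interval_def by blast

lemma median_unique:
  assumes "d x m + d m y = d x y" "d y m + d m z = d y z" "d x m + d m z = d x z"
    and "d x m' + d m' y = d x y" "d y m' + d m' z = d y z" "d x m' + d m' z = d x z"
  shows "m = m'"
  using median assms unfolding median_graph_def interval_def by blast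

lemma gdist_adj_cases:
  assumes "adj a b" shows "d z b = d z a + 1 \<or> d z a = d z b + 1"
proof -
  obtain m where m: "d z m + d m a = d z a" "d a m + d m b = d a b" "d z m + d m b = d z b"
    using median_exists[of z a b] by blast
  have "m = a \<or> m = b"
    using m(2) gdist_adj[OF assms] by (cases "d a m") (auto simp: gdist_commute)
  then show ?thesis using m gdist_adj[OF assms] by (auto simp: gdist_commute)
qed

lemma gdist_adj_neq:
  assumes "adj a b" shows "d z a \<noteq> d z b"
  using gdist_adj_cases[OF assms, of z] by auto

lemma quadrangle:
  assumes "adj w x" "adj w y" "x \<noteq> y" "d z x = k" "d z y = k" "d z w = Suc k"
  obtains t where "adj x t" "adj y t" "d z t + 1 = k"
proof -
  obtain t where t: "d x t + d t y = d x y" "d y t + d t z = d y z" "d x t + d t z = d x z"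
    using median_exists[of x y z] by blast
  have "d x y \<le> d x w + d w y" by (rule gdist_triangle)
  then have "d x y \<le> 2" using assms(1,2) by (simp add: gdist_adj gdist_commute[of x])
  moreover have "d x y \<noteq> 0" using assms(3) by simp
  moreover have "\<not> adj x y" using gdist_adj_neq[of x y z] assms(4,5) by auto
  ultimately have dxy: "d x y = 2" using gdist_eq_1_iff[of x y] by arith
  have "t \<noteq> x" "t \<noteq> y" using t(2,3) dxy assms(4,5) by (auto simp: gdist_commute)
  then have "d x t \<noteq> 0" "d t y \<noteq> 0" by auto
  then have "d x t = 1" "d t y = 1" using t(1) dxy by arith+
  moreover have "d z t + 1 = k" using t(3) assms(4) \<open>d x t = 1\<close> by (simp add: gdist_commute)
  moreover have "adj x t" "adj y t"
    using \<open>d x t = 1\<close> \<open>d t y = 1\<close> gdist_eq_1_iff gdist_commute[of y t] by auto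
  ultimately show ?thesis using that by blast
qed

lemma common_neighbour_unique:
  assumes "adj u x" "adj x v" "adj u y" "adj y v" "d u v = 2"
    and "d u b = k + 1" "d v b = k + 1" "d x b = k" "d y b = k"
  shows "x = y"
proof (rule median_unique[of u _ v b])
  have "d u x = 1" "d x v = 1" "d u y = 1" "d y v = 1"
    using assms(1-4) by (simp_all add: gdist_adj)
  then show "d u x + d x v = d u v" "d v x + d x b = d v b" "d u x + d x b = d u b"
    "d u y + d y v = d u v" "d v y + d y b = d v b" "d u y + d y b = d u b"
    using assms(5-9) by (simp_all add: gdist_commute[of v])
qed

definition W :: "'v \<times> 'v \<Rightarrow> 'v set" where
  "W e = {z. d z (fst e) < d z (snd e)}"

lemma gdist_in_W:
  assumes "adj a b" "z \<in> W (a, b)" shows "d z b = d z a + 1"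
  using gdist_adj_cases[OF assms(1), of z] assms(2) unfolding W_def by (auto simp: gdist_commute)

lemma gdist_notin_W:
  assumes "adj a b" "z \<notin> W (a, b)" shows "d z a = d z b + 1"
  using gdist_adj_cases[OF assms(1), of z] assms(2) unfolding W_def by (auto simp: gdist_commute)

lemma W_swap:
  assumes "adj (fst e) (snd e)" shows "W (prod.swap e) = - W e"
  using gdist_adj_neq[OF assms] unfolding W_def by (auto simp: not_less_iff_gr_or_eq)

lemma fst_in_W: "adj (fst e) (snd e) \<Longrightarrow> fst e \<in> W e"
  unfolding W_def by (simp add: gdist_adj)

lemma W_exit_step:
  assumes "adj a b" "adj x y" "x \<in> W (a, b)" "y \<notin> W (a, b)"
  shows "d a y = d a x + 1"
proof -
  have "d y a = d y b + 1" "d x b = d x a + 1"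
    using gdist_notin_W[OF assms(1,4)] gdist_in_W[OF assms(1,3)] by simp_all
  moreover have "d y a \<le> d x a + 1" "d x b \<le> d y b + 1"
    using gdist_adj_le[OF assms(2)] gdist_adj_le[OF adj_sym[OF assms(2)]] by simp_all
  ultimately show ?thesis by (simp add: gdist_commute)
qed

definition geodesic :: "(nat \<Rightarrow> 'v) \<Rightarrow> nat \<Rightarrow> bool" where
  "geodesic p n \<longleftrightarrow> (\<forall>i<n. adj (p i) (p (Suc i))) \<and> d (p 0) (p n) = n"

lemma geodesic_gdist:
  assumes p: "geodesic p n" and "i \<le> j" "j \<le> n" shows "d (p i) (p j) = j - i"
proof -
  have walk: "walk adj (p i) (p j) (j - i)" if "i \<le> j" "j \<le> n" for i j
    unfolding walk_def using p that unfolding geodesic_def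
    by (intro exI[of _ "\<lambda>k. p (i + k)"] conjI allI impI) auto
  have "n \<le> d (p 0) (p i) + d (p i) (p j) + d (p j) (p n)"
    using p gdist_triangle[of "p 0" "p n" "p i"] gdist_triangle[of "p i" "p n" "p j"]
    unfolding geodesic_def by linarith
  moreover have "d (p 0) (p i) \<le> i" "d (p i) (p j) \<le> j - i" "d (p j) (p n) \<le> n - j"
    using gdist_le_walk[OF walk[of 0 i]] gdist_le_walk[OF walk[of i j]] gdist_le_walk[OF walk[of j n]]
      assms(2,3) by simp_all
  ultimately show ?thesis using assms(2,3) by linarith
qed

lemma geodesic_segment:
  assumes "geodesic p n" "i \<le> j" "j \<le> n" shows "geodesic (\<lambda>k. p (i + k)) (j - i)"
  using assms geodesic_gdist[OF assms] unfolding geodesic_def by auto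

lemma geodesic_in_interval:
  assumes "geodesic p n" "j \<le> n" shows "p j \<in> interval adj (p 0) (p n)"
  using geodesic_gdist[OF assms(1)] assms(2) unfolding mem_interval by simp

lemma geodesic_through:
  assumes "z \<in> interval adj u v"
  obtains p where "geodesic p (d u v)" "p 0 = u" "p (d u v) = v" "p (d u z) = z"
proof -
  have len: "d u z + d z v = d u v" using assms unfolding mem_interval .
  obtain p where "p 0 = u" "p (d u z) = z" "p (d u z + d z v) = v"
    "\<forall>i<d u z + d z v. adj (p i) (p (Suc i))"
    using walk_append_path[OF walk_gdist walk_gdist] by blast
  with that show ?thesis unfolding len geodesic_def by simp
qed

lemma geodesic_update:
  assumes p: "geodesic p n" and i: "0 < i" "i < n"
    and t: "adj (p (i - 1)) t" "adj t (p (Suc i))"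
  shows "geodesic (p(i := t)) n"
proof -
  have "adj ((p(i := t)) j) ((p(i := t)) (Suc j))" if "j < n" for j
  proof -
    consider "j = i" | "Suc j = i" | "j \<noteq> i" "Suc j \<noteq> i" by blast
    then show ?thesis
    proof cases
      case 2
      then have "j = i - 1" by simp
      then show ?thesis using t(1) 2 by simp
    qed (use p t(2) that in \<open>auto simp: geodesic_def\<close>)
  qed
  then show ?thesis using p i unfolding geodesic_def by simp
qed

lemma geodesic_shortcut:
  assumes ab: "adj a b" and p: "geodesic p n"
    and ends: "p 0 \<in> W (a, b)" "p n \<in> W (a, b)"
    and inner: "\<And>j. 0 < j \<Longrightarrow> j < n \<Longrightarrow> p j \<notin> W (a, b)" and i0: "0 < i0" "i0 < n"
  obtains k t where "0 < k" "k < n" "adj (p (k - 1)) t" "adj t (p (Suc k))" "d a t < d a (p k)"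
proof -
  have step: "adj (p j) (p (Suc j))" if "j < n" for j
    using p that unfolding geodesic_def by blast
  have "d a (p 1) = d a (p 0) + 1"
    using W_exit_step[OF ab step ends(1) inner] i0 by simp
  moreover have "n - 1 < n" "Suc (n - 1) = n" using i0 by simp_all
  then have "adj (p n) (p (n - 1))" using step[of "n - 1"] adj_sym by metis
  then have "d a (p (n - 1)) = d a (p n) + 1"
    using W_exit_step[OF ab _ ends(2) inner] i0 by simp
  moreover have "d a (p j) \<noteq> d a (p (Suc j))" if "j < n" for j
    using gdist_adj_neq[OF step[OF that]] .
  ultimately obtain k where k: "0 < k" "k < n"
    "d a (p (k - 1)) < d a (p k)" "d a (p (Suc k)) < d a (p k)"
    using exists_strict_local_max[of n "\<lambda>j. d a (p j)"] by auto
  have k1: "Suc (k - 1) = k" using k(1) by simp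
  then have adjs: "adj (p (k - 1)) (p k)" "adj (p k) (p (Suc k))"
    using step[of "k - 1"] step[of k] k(2) by auto
  have "d a (p (k - 1)) + 1 = d a (p k)" "d a (p (Suc k)) + 1 = d a (p k)"
    using gdist_adj_cases[OF adjs(1), of a] gdist_adj_cases[OF adjs(2), of a] k(3,4) by auto
  then have peak: "d a (p (Suc k)) = d a (p (k - 1))" "d a (p k) = Suc (d a (p (k - 1)))"
    by simp_all
  have "d (p (k - 1)) (p (Suc k)) = 2"
    using geodesic_gdist[OF p, of "k - 1" "Suc k"] k by simp
  then have "p (k - 1) \<noteq> p (Suc k)" by auto
  then obtain t where t: "adj (p (k - 1)) t" "adj (p (Suc k)) t" "d a t + 1 = d a (p (k - 1))"
    by (rule quadrangle[OF adj_sym[OF adjs(1)] adjs(2) _ refl peak])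
  show ?thesis by (rule that[OF k(1,2) t(1) adj_sym[OF t(2)]]) (use t(3) peak(2) in simp)
qed

lemma two_step_shortcut_notin_W:
  assumes ab: "adj a b" and p: "geodesic p 2"
    and "p 0 \<in> W (a, b)" "p 2 \<in> W (a, b)" "p 1 \<notin> W (a, b)"
    and t: "adj (p 0) t" "adj t (p 2)" "d a t < d a (p 1)"
  shows "t \<notin> W (a, b)"
proof
  assume "t \<in> W (a, b)"
  have adjs: "adj (p 0) (p 1)" "adj (p 1) (p 2)"
    using p unfolding geodesic_def by (auto simp: numeral_2_eq_2)
  have p1: "d a (p 1) = d a (p 0) + 1" "d a (p 1) = d a (p 2) + 1"
    using W_exit_step[OF ab adjs(1)] W_exit_step[OF ab adj_sym[OF adjs(2)]] assms(3-5) by simp_all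
  have "d a t + 1 = d a (p 0)" using gdist_adj_cases[OF t(1), of a] t(3) p1 by auto
  have "p 1 = t"
  proof (rule common_neighbour_unique[of "p 0" "p 1" "p 2" t b "d a (p 0)"])
    show "adj (p 0) (p 1)" "adj (p 1) (p 2)" "adj (p 0) t" "adj t (p 2)"
      using adjs t(1,2) .
    show "d (p 0) (p 2) = 2" using p unfolding geodesic_def by simp
    show "d (p 0) b = d a (p 0) + 1" "d (p 2) b = d a (p 0) + 1"
      using gdist_in_W[OF ab] assms(3,4) p1 gdist_commute[of a] by simp_all
    show "d (p 1) b = d a (p 0)"
      using gdist_notin_W[OF ab assms(5)] p1 gdist_commute[of a] by simp
    show "d t b = d a (p 0)"
      using gdist_in_W[OF ab \<open>t \<in> W (a, b)\<close>] \<open>d a t + 1 = d a (p 0)\<close> gdist_commute[of a] by simp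
  qed
  then show False using \<open>t \<in> W (a, b)\<close> assms(5) by simp
qed

lemma geodesic_lighter_exit:
  assumes ab: "adj a b" and p: "geodesic p n"
    and ends: "p 0 \<in> W (a, b)" "p n \<in> W (a, b)"
    and inner: "\<And>j. 0 < j \<Longrightarrow> j < n \<Longrightarrow> p j \<notin> W (a, b)" and i0: "0 < i0" "i0 < n"
  obtains q j where "geodesic q n" "q 0 = p 0" "q n = p n"
    "(\<Sum>j\<le>n. Suc (d a (q j))) < (\<Sum>j\<le>n. Suc (d a (p j)))" "q j \<notin> W (a, b)" "j \<le> n"
proof -
  obtain k t where k: "0 < k" "k < n" and t: "adj (p (k - 1)) t" "adj t (p (Suc k))" "d a t < d a (p k)"
    using geodesic_shortcut[OF ab p ends inner i0] by blast
  define q where "q = p(k := t)"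
  have "geodesic q n" unfolding q_def using geodesic_update[OF p k t(1,2)] .
  moreover have "q 0 = p 0" "q n = p n" using k unfolding q_def by auto
  moreover have "(\<Sum>j\<le>n. Suc (d a (q j))) < (\<Sum>j\<le>n. Suc (d a (p j)))"
    using k t(3) by (intro sum_strict_mono_ex1) (auto simp: q_def intro!: bexI[of _ k])
  moreover obtain j where "q j \<notin> W (a, b)" "j \<le> n"
  proof (cases "n = 2")
    case True
    then have "k = 1" using k by simp
    then have "adj (p 0) t" "adj t (p 2)" "d a t < d a (p 1)"
      using t True by (simp_all add: numeral_2_eq_2)
    then have "t \<notin> W (a, b)"
      using two_step_shortcut_notin_W[OF ab _ ends(1) _ inner[of 1]] p ends(2) True by simp
    then show ?thesis using that[of k] k unfolding q_def by simp
  next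
    case False
    define j where "j = (if k = 1 then 2 else 1 :: nat)"
    have "0 < j" "j < n" "j \<noteq> k" using k False unfolding j_def by auto
    then show ?thesis using that[of j] inner[of j] unfolding q_def by simp
  qed
  ultimately show ?thesis using that by blast
qed

text \<open>Induction on the weight of the geodesic: a geodesic leaving W (a, b) has a vertex
  farthest from a, and the quadrangle condition replaces it by a vertex closer to a.\<close>
lemma geodesic_in_W:
  assumes ab: "adj a b"
  shows "geodesic p n \<Longrightarrow> p 0 \<in> W (a, b) \<Longrightarrow> p n \<in> W (a, b) \<Longrightarrow> i \<le> n \<Longrightarrow> p i \<in> W (a, b)"
proof (induction "\<Sum>j\<le>n. Suc (d a (p j))" arbitrary: p n i rule: less_induct)
  case less
  let ?W = "W (a, b)"
  have segment: "p j \<in> ?W"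
    if "j0 \<le> j" "j \<le> j1" "j1 \<le> n" "(j0, j1) \<noteq> (0, n)" "p j0 \<in> ?W" "p j1 \<in> ?W" for j j0 j1
  proof -
    have lighter: "(\<Sum>k\<le>j1 - j0. Suc (d a (p (j0 + k)))) < (\<Sum>j\<le>n. Suc (d a (p j)))"
      using sum_Suc_segment_less[of j0 j1 n "\<lambda>j. d a (p j)"] that(1-4) by simp
    have "geodesic (\<lambda>k. p (j0 + k)) (j1 - j0)"
      using geodesic_segment[OF less.prems(1)] that(1-3) by simp
    then have "p (j0 + (j - j0)) \<in> ?W"
      by (rule less.hyps[OF lighter]) (use that in auto)
    then show ?thesis using that(1) by simp
  qed
  show ?case
  proof (rule ccontr)
    assume "p i \<notin> ?W"
    then have i0: "0 < i" "i < n" using less.prems(2-4) by (auto intro: gr0I le_neq_trans)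
    have inner: "p j \<notin> ?W" if "0 < j" "j < n" for j
    proof
      assume "p j \<in> ?W"
      then have "p i \<in> ?W"
        using segment[of j i n] segment[of 0 i j] that i0 less.prems(2,3) by (cases "j \<le> i") auto
      then show False using \<open>p i \<notin> ?W\<close> by simp
    qed
    obtain q j where q: "geodesic q n" "q 0 = p 0" "q n = p n"
      "(\<Sum>j\<le>n. Suc (d a (q j))) < (\<Sum>j\<le>n. Suc (d a (p j)))" and "q j \<notin> ?W" "j \<le> n"
      by (rule geodesic_lighter_exit[OF ab less.prems(1-3) inner i0])
    moreover have "q j \<in> ?W" by (rule less.hyps[OF q(4,1)]) (use q(2,3) less.prems(2,3) \<open>j \<le> n\<close> in simp_all)
    ultimately show False by simp
  qed
qed

lemma W_convex:
  assumes "adj a b" "u \<in> W (a, b)" "v \<in> W (a, b)" "z \<in> interval adj u v"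
  shows "z \<in> W (a, b)"
proof -
  obtain p where "geodesic p (d u v)" "p 0 = u" "p (d u v) = v" "p (d u z) = z"
    using geodesic_through[OF assms(4)] by blast
  moreover have "d u z \<le> d u v" using assms(4) unfolding mem_interval by linarith
  ultimately show ?thesis using geodesic_in_W[OF assms(1)] assms(2,3) by metis
qed

lemma W_eq_if_crossing_edge:
  assumes "adj a b" "adj x y" "x \<in> W (a, b)" "y \<notin> W (a, b)"
  shows "W (x, y) = W (a, b)"
proof -
  have sub: "W (a', b') \<subseteq> W (x', y')"
    if ab: "adj a' b'" and xy: "adj x' y'" "x' \<in> W (a', b')" "y' \<notin> W (a', b')" for a' b' x' y'
  proof
    fix z assume z: "z \<in> W (a', b')"
    show "z \<in> W (x', y')"
    proof (rule ccontr)
      assume "z \<notin> W (x', y')"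
      then have "d z x' = d z y' + 1" by (rule gdist_notin_W[OF xy(1)])
      then have "y' \<in> interval adj z x'"
        unfolding mem_interval using gdist_adj[OF adj_sym[OF xy(1)]] by simp
      then have "y' \<in> W (a', b')" by (rule W_convex[OF ab z xy(2)])
      with xy(3) show False by simp
    qed
  qed
  have swap: "W (b, a) = - W (a, b)" "W (y, x) = - W (x, y)"
    using W_swap[of "(a, b)"] W_swap[of "(x, y)"] assms(1,2) by simp_all
  have "W (a, b) \<subseteq> W (x, y)" by (rule sub[OF assms])
  moreover have "W (b, a) \<subseteq> W (y, x)"
    by (rule sub[OF adj_sym[OF assms(1)] adj_sym[OF assms(2)]]) (use assms(3,4) swap in auto)
  ultimately show ?thesis using swap by auto
qed

lemma theta_iff_crossing:
  assumes "adj (fst e) (snd e)"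
  shows "theta adj e f \<longleftrightarrow> (fst f \<in> W e \<longleftrightarrow> snd f \<notin> W e)"
proof -
  obtain a b where e: "e = (a, b)" by (cases e)
  obtain x y where f: "f = (x, y)" by (cases f)
  have ab: "adj a b" using assms e by simp
  have "theta adj e f \<longleftrightarrow> d x a + d y b \<noteq> d y a + d x b"
    unfolding theta_def e f using gdist_commute[of a x] gdist_commute[of b y]
      gdist_commute[of a y] gdist_commute[of b x] by simp
  moreover have "x \<in> W (a, b) \<and> d x b = d x a + 1 \<or> x \<notin> W (a, b) \<and> d x a = d x b + 1"
    using gdist_in_W[OF ab, of x] gdist_notin_W[OF ab, of x] by blast
  moreover have "y \<in> W (a, b) \<and> d y b = d y a + 1 \<or> y \<notin> W (a, b) \<and> d y a = d y b + 1"
    using gdist_in_W[OF ab, of y] gdist_notin_W[OF ab, of y] by blast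
  ultimately show ?thesis unfolding e f by auto
qed

lemma theta_iff_W:
  assumes e: "adj (fst e) (snd e)" and f: "adj (fst f) (snd f)"
  shows "theta adj e f \<longleftrightarrow> W f = W e \<or> W f = W (prod.swap e)"
proof -
  have "fst f \<in> W f" "snd f \<notin> W f"
    using fst_in_W[OF f] W_swap[OF f] fst_in_W[of "prod.swap f"] adj_sym[OF f] by auto
  moreover have "W f = W e" if "fst f \<in> W e" "snd f \<notin> W e"
    using W_eq_if_crossing_edge[of "fst e" "snd e" "fst f" "snd f"] e f that by simp
  moreover have "W f = W (prod.swap e)" if "fst f \<notin> W e" "snd f \<in> W e"
    using W_eq_if_crossing_edge[of "snd e" "fst e" "fst f" "snd f"] adj_sym[OF e] f that W_swap[OF e]
    by (simp add: prod.swap_def)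
  ultimately show ?thesis
    unfolding theta_iff_crossing[OF e] using W_swap[OF e] by blast
qed

lemma interval_has_crossing_edge:
  assumes ab: "adj a b" and z: "z \<in> W (a, b)" and z': "z' \<notin> W (a, b)"
  obtains x y where "adj x y" "x \<in> W (a, b)" "y \<notin> W (a, b)"
    "x \<in> interval adj z z'" "y \<in> interval adj z z'"
proof -
  obtain p where p: "geodesic p (d z z')" "p 0 = z" "p (d z z') = z'"
    using geodesic_through[of z z z'] unfolding mem_interval by auto
  define n where "n = d z z'"
  define j where "j = (LEAST j. p (Suc j) \<notin> W (a, b))"
  have "n \<noteq> 0" using z z' unfolding n_def by auto
  then have "Suc (n - 1) = n" by simp
  then have "p (Suc (n - 1)) \<notin> W (a, b)" using p z' unfolding n_def by simp
  then have j: "p (Suc j) \<notin> W (a, b)" "j \<le> n - 1"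
    unfolding j_def by (fact LeastI, fact Least_le)
  have "p j \<in> W (a, b)"
  proof (cases j)
    case (Suc i)
    then have "\<not> p (Suc i) \<notin> W (a, b)"
      using not_less_Least[of i "\<lambda>j. p (Suc j) \<notin> W (a, b)"] unfolding j_def by simp
    then show ?thesis using Suc by simp
  qed (use p z in simp)
  moreover have jn: "j < n" using j(2) \<open>n \<noteq> 0\<close> by simp
  then have "adj (p j) (p (Suc j))" using p unfolding geodesic_def n_def by simp
  moreover have "p j \<in> interval adj z z'" "p (Suc j) \<in> interval adj z z'"
    using geodesic_in_interval[OF p(1)] p jn unfolding n_def by auto
  ultimately show ?thesis using that j(1) by blast
qed

definition dual_hyp :: "'v set \<Rightarrow> 'v \<times> 'v \<Rightarrow> ('v \<times> 'v) set" where
  "dual_hyp Y e = {f \<in> edges_in adj Y. theta adj e f}"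

lemma mem_hyperplanes_iff: "H \<in> hyperplanes adj Y \<longleftrightarrow> (\<exists>e\<in>edges_in adj Y. H = dual_hyp Y e)"
  unfolding hyperplanes_def dual_hyp_def by auto

lemma swap_edges_in: "e \<in> edges_in adj Y \<Longrightarrow> prod.swap e \<in> edges_in adj Y"
  unfolding edges_in_def by (auto intro: adj_sym)

lemma mem_dual_hyp_iff:
  assumes "e \<in> edges_in adj Y"
  shows "f \<in> dual_hyp Y e \<longleftrightarrow> f \<in> edges_in adj Y \<and> (W f = W e \<or> W f = W (prod.swap e))"
  unfolding dual_hyp_def using theta_iff_W edges_inD assms by blast

lemma edge_in_dual_hyp: "e \<in> edges_in adj Y \<Longrightarrow> e \<in> dual_hyp Y e"
  by (simp add: mem_dual_hyp_iff)

lemma dual_hyp_eq: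
  assumes e: "e \<in> edges_in adj Y" and f: "f \<in> dual_hyp Y e"
  shows "dual_hyp Y f = dual_hyp Y e"
proof -
  have fe: "f \<in> edges_in adj Y" using f unfolding dual_hyp_def by simp
  have we: "W (prod.swap e) = - W e" and wf: "W (prod.swap f) = - W f"
    using W_swap edges_inD[OF e] edges_inD[OF fe] by auto
  have "W f = W e \<or> W f = - W e" using f mem_dual_hyp_iff[OF e] we by simp
  then have "(W g = W f \<or> W g = - W f) \<longleftrightarrow> (W g = W e \<or> W g = - W e)" for g by auto
  then show ?thesis unfolding set_eq_iff mem_dual_hyp_iff[OF e] mem_dual_hyp_iff[OF fe] we wf by blast
qed

lemma dual_hyp_swap: "e \<in> edges_in adj Y \<Longrightarrow> dual_hyp Y (prod.swap e) = dual_hyp Y e"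
  by (metis dual_hyp_eq edge_in_dual_hyp mem_dual_hyp_iff swap_edges_in swap_swap)

lemma halfspace_eq_W: "halfspace adj Y e = W e \<inter> Y"
  unfolding halfspace_def W_def by auto

lemma halfspace_subset: "halfspace adj Y e \<subseteq> Y"
  unfolding halfspace_def by auto

lemma halfspace_swap: "e \<in> edges_in adj Y \<Longrightarrow> halfspace adj Y (prod.swap e) = Y - halfspace adj Y e"
  unfolding halfspace_eq_W using W_swap edges_inD by blast

lemma halfspaces_dual_hyp:
  assumes "e \<in> edges_in adj Y"
  shows "halfspaces adj Y (dual_hyp Y e) = {halfspace adj Y e, halfspace adj Y (prod.swap e)}"
  unfolding halfspaces_def halfspace_eq_W using mem_dual_hyp_iff[OF assms]
    edge_in_dual_hyp[OF assms] edge_in_dual_hyp[OF swap_edges_in[OF assms]] dual_hyp_swap[OF assms]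
  by fastforce

lemma carrier_dual_hyp_subset: "carrier (dual_hyp Y e) \<subseteq> Y"
  unfolding carrier_def dual_hyp_def edges_in_def by auto

lemma fst_in_carrier_dual_hyp: "e \<in> edges_in adj Y \<Longrightarrow> fst e \<in> carrier (dual_hyp Y e)"
  unfolding carrier_def using edge_in_dual_hyp by blast

lemma halfspace_convex:
  assumes "convex_set adj Y" "e \<in> edges_in adj Y"
    and "u \<in> halfspace adj Y e" "v \<in> halfspace adj Y e" "z \<in> interval adj u v"
  shows "z \<in> halfspace adj Y e"
  using assms W_convex[of "fst e" "snd e" u v z] edges_inD[OF assms(2)]
  unfolding halfspace_eq_W convex_set_def by auto

lemma interval_meets_carrier:
  assumes Y: "convex_set adj Y" and e: "e \<in> edges_in adj Y"
    and z: "z \<in> halfspace adj Y e" and z': "z' \<in> Y - halfspace adj Y e"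
  obtains c where "c \<in> carrier (dual_hyp Y e)" "c \<in> interval adj z z'"
proof -
  have ab: "adj (fst e) (snd e)" using edges_inD[OF e] by blast
  obtain x y where xy: "adj x y" "x \<in> W e" "y \<notin> W e" "x \<in> interval adj z z'" "y \<in> interval adj z z'"
    using interval_has_crossing_edge[of "fst e" "snd e" z z'] ab z z' unfolding halfspace_eq_W by auto
  have "x \<in> Y" "y \<in> Y" using Y z z' xy(4,5) halfspace_subset unfolding convex_set_def by blast+
  then have "(x, y) \<in> edges_in adj Y" using xy(1) unfolding edges_in_def by simp
  moreover have "theta adj e (x, y)" using theta_iff_crossing[OF ab] xy(2,3) by simp
  ultimately have "x \<in> carrier (dual_hyp Y e)"
    unfolding carrier_def dual_hyp_def by (simp add: image_iff) (metis fst_conv)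
  with xy(4) that show ?thesis by blast
qed

lemma same_halfspace_if_close:
  assumes Y: "convex_set adj Y" and e: "e \<in> edges_in adj Y" and "z \<in> Y" "z' \<in> Y"
    and close: "\<And>c. c \<in> carrier (dual_hyp Y e) \<Longrightarrow> d z z' < d z c"
  shows "z \<in> halfspace adj Y e \<longleftrightarrow> z' \<in> halfspace adj Y e"
proof -
  have no_cross: False if sides: "z \<in> halfspace adj Y f" "z' \<in> Y - halfspace adj Y f"
    and f: "f \<in> edges_in adj Y" "dual_hyp Y f = dual_hyp Y e" for f
  proof -
    obtain c where "c \<in> carrier (dual_hyp Y f)" "c \<in> interval adj z z'"
      by (rule interval_meets_carrier[OF Y f(1) sides])
    then show False using close[of c] f(2) unfolding mem_interval by simp
  qed
  have "z' \<in> halfspace adj Y e" if "z \<in> halfspace adj Y e"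
    using no_cross[of e] that e assms(4) by blast
  moreover have "z \<in> halfspace adj Y e" if "z' \<in> halfspace adj Y e"
    using no_cross[of "prod.swap e"] that assms(3,4) swap_edges_in[OF e]
    unfolding halfspace_swap[OF e] dual_hyp_swap[OF e] by blast
  ultimately show ?thesis by blast
qed

lemma carrier_meets_halfspace:
  assumes Y: "convex_set adj Y" and e: "e \<in> edges_in adj Y" and f: "f \<in> edges_in adj Y"
    and "halfspace adj Y e \<inter> halfspace adj Y f \<noteq> {}"
    and "halfspace adj Y e \<inter> halfspace adj Y (prod.swap f) \<noteq> {}"
  obtains c where "c \<in> carrier (dual_hyp Y f)" "c \<in> halfspace adj Y e"
proof -
  obtain z1 where z1: "z1 \<in> halfspace adj Y e" "z1 \<in> halfspace adj Y f" using assms(4) by blast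
  obtain z2 where z2: "z2 \<in> halfspace adj Y e" "z2 \<in> Y - halfspace adj Y f"
    using assms(5) halfspace_swap[OF f] by blast
  obtain c where "c \<in> carrier (dual_hyp Y f)" "c \<in> interval adj z1 z2"
    by (rule interval_meets_carrier[OF Y f z1(2) z2(2)])
  with halfspace_convex[OF Y e z1(1) z2(1)] that show ?thesis by blast
qed

lemma crosses_carrier_between:
  assumes Y: "convex_set adj Y" and e: "e \<in> edges_in adj Y" and f: "f \<in> edges_in adj Y"
    and cr: "crosses adj Y (dual_hyp Y e) (dual_hyp Y f)"
  obtains c1 c2 c where "c1 \<in> carrier (dual_hyp Y f)" "c2 \<in> carrier (dual_hyp Y f)"
    "c \<in> carrier (dual_hyp Y e)" "c \<in> interval adj c1 c2"
proof -
  have e': "prod.swap e \<in> edges_in adj Y" by (rule swap_edges_in[OF e])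
  have quarters: "halfspace adj Y e' \<inter> halfspace adj Y f' \<noteq> {}"
    if "e' \<in> {e, prod.swap e}" "f' \<in> {f, prod.swap f}" for e' f'
    using cr that unfolding crosses_def halfspaces_dual_hyp[OF e] halfspaces_dual_hyp[OF f] by blast
  obtain c1 where c1: "c1 \<in> carrier (dual_hyp Y f)" "c1 \<in> halfspace adj Y e"
    by (rule carrier_meets_halfspace[OF Y e f quarters[of e f] quarters[of e "prod.swap f"]]) simp_all
  obtain c2 where c2: "c2 \<in> carrier (dual_hyp Y f)" "c2 \<in> halfspace adj Y (prod.swap e)"
    by (rule carrier_meets_halfspace[OF Y e' f quarters[of "prod.swap e" f]
          quarters[of "prod.swap e" "prod.swap f"]]) simp_all
  have "c2 \<in> Y - halfspace adj Y e" using c2(2) halfspace_swap[OF e] by simp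
  then obtain c where "c \<in> carrier (dual_hyp Y e)" "c \<in> interval adj c1 c2"
    by (rule interval_meets_carrier[OF Y e c1(2)])
  with c1(1) c2(1) that show ?thesis by blast
qed

lemma dual_hyp_graph_aut:
  assumes g: "graph_aut adj g" and gY: "g ` Y = Y"
  shows "hyp_image g (dual_hyp Y e) = dual_hyp Y (map_prod g g e)"
proof (intro equalityI subsetI)
  fix x assume "x \<in> hyp_image g (dual_hyp Y e)"
  then obtain f where f: "x = map_prod g g f" "f \<in> dual_hyp Y e"
    unfolding hyp_image_def by (rule imageE)
  then show "x \<in> dual_hyp Y (map_prod g g e)"
    unfolding dual_hyp_def by (simp add: theta_graph_aut[OF g] edges_in_graph_aut[OF g gY])
next
  fix x assume x: "x \<in> dual_hyp Y (map_prod g g e)"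
  define f where "f = map_prod (inv g) (inv g) x"
  have "x = map_prod g g f"
    unfolding f_def using bij_is_surj[OF graph_aut_bij[OF g]] by (cases x) (simp add: surj_f_inv_f)
  moreover have "f \<in> dual_hyp Y e"
    using x unfolding dual_hyp_def \<open>x = map_prod g g f\<close>
    by (simp add: theta_graph_aut[OF g] edges_in_graph_aut[OF g gY])
  ultimately show "x \<in> hyp_image g (dual_hyp Y e)" unfolding hyp_image_def by blast
qed

end

locale cocompact_quasiline = cat0_cube_complex adj for adj :: "'v \<Rightarrow> 'v \<Rightarrow> bool" +
  fixes Y :: "'v set" and \<phi> :: "'v \<Rightarrow> 'v" and x0 :: 'v
  assumes locally_finite_adj: "locally_finite adj"
    and graph_aut_phi: "graph_aut adj \<phi>"
    and phi_free: "\<And>S. finite S \<Longrightarrow> S \<noteq> {} \<Longrightarrow> \<phi> ` S \<noteq> S"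
    and convex_Y: "convex_set adj Y"
    and phi_Y: "\<phi> ` Y = Y"
    and cocompact: "finitely_many_orbits (cyclic_subgroup \<phi>) Y"
    and x0_in_Y: "x0 \<in> Y"
begin

abbreviation \<Phi> :: "int \<Rightarrow> 'v \<Rightarrow> 'v" where "\<Phi> n \<equiv> fpow \<phi> n"

lemma graph_aut_\<Phi>: "graph_aut adj (\<Phi> n)"
  by (rule graph_aut_fpow[OF graph_aut_phi])

lemma bij_phi: "bij \<phi>"
  by (rule graph_aut_bij[OF graph_aut_phi])

lemma \<Phi>_Y: "\<Phi> n ` Y = Y"
  by (rule fpow_image_eq[OF bij_phi phi_Y])

lemma \<Phi>_in_Y: "y \<in> Y \<Longrightarrow> \<Phi> n y \<in> Y"
  using \<Phi>_Y by blast

lemma \<Phi>_add: "\<Phi> (a + b) x = \<Phi> a (\<Phi> b x)"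
  by (rule fpow_add_apply[OF bij_phi])

lemma \<Phi>_neg_apply: "\<Phi> (- a) (\<Phi> a x) = x"
  by (rule fpow_neg_apply[OF bij_phi])

lemma \<Phi>_apply_neg: "\<Phi> a (\<Phi> (- a) x) = x"
  by (rule fpow_apply_neg[OF bij_phi])

lemma gdist_\<Phi>: "d (\<Phi> n x) (\<Phi> n y) = d x y"
  by (rule gdist_graph_aut[OF graph_aut_\<Phi>])

lemma hyp_image_\<Phi>_add: "hyp_image (\<Phi> a) (hyp_image (\<Phi> b) H) = hyp_image (\<Phi> (a + b)) H"
  by (simp add: hyp_image_comp[symmetric] fpow_add[OF bij_phi])

lemma finite_ball: "finite {y. d x y \<le> R}"
proof (induction R)
  case 0
  then show ?case by simp
next
  case (Suc R)
  have "{y. d x y \<le> Suc R} \<subseteq> {y. d x y \<le> R} \<union> (\<Union>z\<in>{y. d x y \<le> R}. {w. adj z w})"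
  proof
    fix y assume "y \<in> {y. d x y \<le> Suc R}"
    moreover have "y \<in> (\<Union>z\<in>{y. d x y \<le> R}. {w. adj z w})" if "d x y = Suc R"
    proof -
      have "walk adj x y (Suc R)" using walk_gdist[of x y] that by simp
      then obtain y' where "walk adj x y' R" "adj y' y" by (rule walk_Suc_lastE)
      then show ?thesis using gdist_le_walk by blast
    qed
    ultimately show "y \<in> {y. d x y \<le> R} \<union> (\<Union>z\<in>{y. d x y \<le> R}. {w. adj z w})"
      by (cases "d x y = Suc R") auto
  qed
  moreover have "finite (\<Union>z\<in>{y. d x y \<le> R}. {w. adj z w})"
    using Suc locally_finite_adj unfolding locally_finite_def by blast
  ultimately show ?case using Suc finite_subset by blast
qed

definition cobound :: nat where
  "cobound = (SOME r. \<forall>y\<in>Y. \<exists>n. d y (\<Phi> n x0) \<le> r)"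

lemma near_orbit:
  assumes "y \<in> Y" shows "\<exists>n. d y (\<Phi> n x0) \<le> cobound"
proof -
  obtain F where F: "finite F" "Y \<subseteq> (\<Union>f\<in>F. (\<lambda>g. g f) ` cyclic_subgroup \<phi>)"
    using cocompact unfolding finitely_many_orbits_def by blast
  have "\<forall>y\<in>Y. \<exists>n. d y (\<Phi> n x0) \<le> (\<Sum>f\<in>F. d f x0)"
  proof
    fix y assume "y \<in> Y"
    then obtain f n where "f \<in> F" "y = \<Phi> n f" using F(2) unfolding cyclic_subgroup_def by blast
    then have "d y (\<Phi> n x0) \<le> (\<Sum>f\<in>F. d f x0)"
      using member_le_sum[of f F "\<lambda>f. d f x0"] F(1) by (simp add: gdist_\<Phi>)
    then show "\<exists>n. d y (\<Phi> n x0) \<le> (\<Sum>f\<in>F. d f x0)" ..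
  qed
  then have "\<forall>y\<in>Y. \<exists>n. d y (\<Phi> n x0) \<le> cobound"
    unfolding cobound_def by (rule someI[where P = "\<lambda>r. \<forall>y\<in>Y. \<exists>n. d y (\<Phi> n x0) \<le> r"])
  with assms show ?thesis by blast
qed

lemma near_orbit_of:
  assumes "y \<in> Y" shows "\<exists>n. d y (\<Phi> n (\<Phi> k x0)) \<le> cobound"
proof -
  obtain n where "d y (\<Phi> n x0) \<le> cobound" using near_orbit[OF assms] by blast
  moreover have "\<Phi> n x0 = \<Phi> (n - k) (\<Phi> k x0)" using \<Phi>_add[of "n - k" k x0] by simp
  ultimately show ?thesis by auto
qed

lemma \<Phi>_displacement: "d (\<Phi> k x) (\<Phi> n (\<Phi> k x)) = d x (\<Phi> n x)"
  using gdist_\<Phi>[of k x "\<Phi> n x"] \<Phi>_add[of n k x] \<Phi>_add[of k n x] by (simp add: add.commute)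

lemma \<Phi>_no_fixpoint:
  assumes "m \<noteq> 0" shows "\<Phi> m x \<noteq> x"
proof
  assume fixed: "\<Phi> m x = x"
  define orbit where "orbit = range (\<lambda>n. \<Phi> n x)"
  have "orbit = (\<lambda>n. \<Phi> n x) ` {0..<\<bar>m\<bar>}"
    unfolding orbit_def using assms by (rule periodic_int_range) (simp add: \<Phi>_add fixed)
  then have "finite orbit" "orbit \<noteq> {}" unfolding orbit_def by auto
  moreover have "\<phi> ` orbit = orbit"
  proof -
    have "\<phi> (\<Phi> n x) = \<Phi> (n + 1) x" for n using \<Phi>_add[of 1 n x] by (simp add: add.commute)
    then have "\<phi> ` orbit = range (\<lambda>n. \<Phi> (n + 1) x)" unfolding orbit_def image_image by simp
    also have "\<dots> = orbit"
    proof
      show "orbit \<subseteq> range (\<lambda>n. \<Phi> (n + 1) x)"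
      proof
        fix y assume "y \<in> orbit"
        then obtain n where "y = \<Phi> ((n - 1) + 1) x" unfolding orbit_def by auto
        then show "y \<in> range (\<lambda>n. \<Phi> (n + 1) x)" by blast
      qed
    qed (auto simp: orbit_def)
    finally show ?thesis .
  qed
  ultimately show False using phi_free by blast
qed

lemma finite_short_translations: "finite {n. d x0 (\<Phi> n x0) \<le> R}"
proof -
  have "inj (\<lambda>n. \<Phi> n x0)"
  proof (rule injI)
    fix n1 n2 assume "\<Phi> n1 x0 = \<Phi> n2 x0"
    then have "\<Phi> (- n2 + n1) x0 = x0" using \<Phi>_add[of "- n2" n1 x0] \<Phi>_neg_apply by simp
    then show "n1 = n2" using \<Phi>_no_fixpoint[of "- n2 + n1" x0] by auto
  qed
  moreover have "finite ((\<lambda>n. \<Phi> n x0) ` {n. d x0 (\<Phi> n x0) \<le> R})"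
    by (rule finite_subset[OF _ finite_ball[of x0 R]]) auto
  ultimately show ?thesis using finite_imageD inj_on_subset[OF _ subset_UNIV] by blast
qed

lemma translations_diverge: "\<exists>N\<ge>0. \<forall>n. N \<le> \<bar>n\<bar> \<longrightarrow> R < d x0 (\<Phi> n x0)"
  using finite_int_set_bounded[OF finite_short_translations[of R]] by (auto simp: not_le[symmetric])

lemma short_translations_bounded: "\<exists>M. \<forall>n. \<bar>n\<bar> < N \<longrightarrow> d x0 (\<Phi> n x0) \<le> M"
proof -
  have "finite {n::int. \<bar>n\<bar> < N}" by (rule finite_subset[of _ "{-N..N}"]) auto
  then have "\<exists>M. \<forall>n\<in>{n. \<bar>n\<bar> < N}. d x0 (\<Phi> n x0) \<le> M"
    by (rule finite_uniform_bound) auto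
  then show ?thesis by simp
qed

definition bounded_set :: "'v set \<Rightarrow> bool" where
  "bounded_set S \<longleftrightarrow> (\<exists>R. \<forall>x\<in>S. d x0 x \<le> R)"

lemma Y_unbounded: "\<not> bounded_set Y"
proof
  assume "bounded_set Y"
  then obtain R where "Y \<subseteq> {y. d x0 y \<le> R}" unfolding bounded_set_def by blast
  then have "finite Y" using finite_ball finite_subset by blast
  then show False using phi_free[of Y] phi_Y x0_in_Y by blast
qed

definition base_edges :: "('v \<times> 'v) set" where
  "base_edges = {e \<in> edges_in adj Y. d x0 (fst e) \<le> cobound}"

lemma finite_base_edges: "finite base_edges"
proof -
  have "base_edges \<subseteq> (SIGMA a:{y. d x0 y \<le> cobound}. {b. adj a b})"
    unfolding base_edges_def edges_in_def by auto
  moreover have "finite (SIGMA a:{y. d x0 y \<le> cobound}. {b. adj a b})"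
    using finite_ball locally_finite_adj unfolding locally_finite_def by blast
  ultimately show ?thesis using finite_subset by blast
qed

lemma translate_to_base_edge:
  assumes "e \<in> edges_in adj Y" "d (fst e) (\<Phi> n x0) \<le> cobound"
  shows "map_prod (\<Phi> (- n)) (\<Phi> (- n)) e \<in> base_edges"
proof -
  have "d x0 (\<Phi> (- n) (fst e)) = d (\<Phi> n x0) (fst e)"
    using gdist_\<Phi>[of n x0 "\<Phi> (- n) (fst e)"] by (simp add: \<Phi>_apply_neg)
  moreover have "map_prod (\<Phi> (- n)) (\<Phi> (- n)) e \<in> edges_in adj Y"
    using edges_in_graph_aut[OF graph_aut_\<Phi> \<Phi>_Y] assms(1) by simp
  ultimately show ?thesis using assms(2) gdist_commute[of "fst e"] unfolding base_edges_def by simp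
qed

lemma hyp_image_\<Phi>_dual_hyp:
  "hyp_image (\<Phi> n) (dual_hyp Y e) = dual_hyp Y (map_prod (\<Phi> n) (\<Phi> n) e)"
  by (rule dual_hyp_graph_aut[OF graph_aut_\<Phi> \<Phi>_Y])

lemma map_prod_\<Phi>_apply_neg: "map_prod (\<Phi> n) (\<Phi> n) (map_prod (\<Phi> (- n)) (\<Phi> (- n)) e) = e"
  by (cases e) (simp add: \<Phi>_apply_neg)

lemma hyperplane_translate_of_base:
  assumes "H \<in> hyperplanes adj Y"
  obtains n e0 where "e0 \<in> base_edges" "H = hyp_image (\<Phi> n) (dual_hyp Y e0)"
proof -
  obtain e where e: "e \<in> edges_in adj Y" "H = dual_hyp Y e"
    using assms mem_hyperplanes_iff by blast
  obtain n where "d (fst e) (\<Phi> n x0) \<le> cobound" using near_orbit edges_inD[OF e(1)] by blast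
  then have "map_prod (\<Phi> (- n)) (\<Phi> (- n)) e \<in> base_edges" by (rule translate_to_base_edge[OF e(1)])
  moreover have "H = hyp_image (\<Phi> n) (dual_hyp Y (map_prod (\<Phi> (- n)) (\<Phi> (- n)) e))"
    unfolding hyp_image_\<Phi>_dual_hyp map_prod_\<Phi>_apply_neg e(2) ..
  ultimately show ?thesis by (rule that)
qed

lemma unbounded_hyperplane_near_orbit:
  assumes H: "H \<in> hyperplanes adj Y" and unbounded: "\<not> bounded_set (carrier H)"
  shows "infinite {n. \<exists>f\<in>H. d (fst f) (\<Phi> n x0) \<le> cobound}" (is "infinite ?NS")
proof
  assume fin: "finite ?NS"
  obtain e where e: "H = dual_hyp Y e" using H mem_hyperplanes_iff by blast
  have "d x0 c \<le> cobound + (\<Sum>n\<in>?NS. d x0 (\<Phi> n x0))" if c: "c \<in> carrier H" for c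
  proof -
    obtain f where f: "f \<in> H" "c = fst f" using c unfolding carrier_def by blast
    have "c \<in> Y" using c carrier_dual_hyp_subset e by blast
    then obtain n where n: "d c (\<Phi> n x0) \<le> cobound" using near_orbit by blast
    then have "n \<in> ?NS" using f by blast
    then have "d x0 (\<Phi> n x0) \<le> (\<Sum>n\<in>?NS. d x0 (\<Phi> n x0))"
      using fin by (intro member_le_sum) simp_all
    then show ?thesis
      using gdist_triangle[of x0 c "\<Phi> n x0"] n gdist_commute[of c "\<Phi> n x0"] by linarith
  qed
  then show False using unbounded unfolding bounded_set_def by blast
qed

text \<open>The edges of H near the orbit points \<Phi> n x0 translate back to the finitely many base
  edges, so two different n give the same base edge.\<close>
lemma unbounded_hyperplane_periodic:
  assumes H: "H \<in> hyperplanes adj Y" and unbounded: "\<not> bounded_set (carrier H)"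
  obtains m where "m \<noteq> 0" "hyp_image (\<Phi> m) H = H"
proof -
  obtain e where e: "e \<in> edges_in adj Y" "H = dual_hyp Y e"
    using H mem_hyperplanes_iff by blast
  define NS where "NS = {n. \<exists>f\<in>H. d (fst f) (\<Phi> n x0) \<le> cobound}"
  have "infinite NS" unfolding NS_def by (rule unbounded_hyperplane_near_orbit[OF H unbounded])
  define edge_at where "edge_at n = (SOME f. f \<in> H \<and> d (fst f) (\<Phi> n x0) \<le> cobound)" for n
  have edge_at: "edge_at n \<in> H" "d (fst (edge_at n)) (\<Phi> n x0) \<le> cobound" if "n \<in> NS" for n
  proof -
    have "edge_at n \<in> H \<and> d (fst (edge_at n)) (\<Phi> n x0) \<le> cobound"
      unfolding edge_at_def by (rule someI_ex) (use that in \<open>auto simp: NS_def\<close>)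
    then show "edge_at n \<in> H" "d (fst (edge_at n)) (\<Phi> n x0) \<le> cobound" by simp_all
  qed
  define base_of where "base_of n = map_prod (\<Phi> (- n)) (\<Phi> (- n)) (edge_at n)" for n
  have "edge_at n \<in> edges_in adj Y" if "n \<in> NS" for n
    using edge_at(1)[OF that] e(2) unfolding dual_hyp_def by blast
  then have "base_of ` NS \<subseteq> base_edges"
    unfolding base_of_def using translate_to_base_edge edge_at(2) by blast
  then have "\<not> inj_on base_of NS"
    using finite_base_edges \<open>infinite NS\<close> finite_subset finite_imageD by blast
  then obtain n1 n2 where n: "n1 \<in> NS" "n2 \<in> NS" "n1 \<noteq> n2" "base_of n1 = base_of n2"
    unfolding inj_on_def by blast
  have translate: "hyp_image (\<Phi> n) (dual_hyp Y (base_of n)) = H" if "n \<in> NS" for n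
    unfolding hyp_image_\<Phi>_dual_hyp base_of_def map_prod_\<Phi>_apply_neg
    using dual_hyp_eq[OF e(1)] edge_at(1)[OF that] e(2) by simp
  have "hyp_image (\<Phi> (n2 - n1)) H = hyp_image (\<Phi> (n2 - n1)) (hyp_image (\<Phi> n1) (dual_hyp Y (base_of n1)))"
    using translate[OF n(1)] by simp
  also have "\<dots> = hyp_image (\<Phi> n2) (dual_hyp Y (base_of n2))" by (simp add: hyp_image_\<Phi>_add n(4))
  also have "\<dots> = H" by (rule translate[OF n(2)])
  finally have "hyp_image (\<Phi> (n2 - n1)) H = H" .
  moreover have "n2 - n1 \<noteq> 0" using n(3) by simp
  ultimately show ?thesis using that by blast
qed

lemma periodic_hyperplane_finite_orbit:
  assumes "m \<noteq> 0" "hyp_image (\<Phi> m) H = H"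
  shows "finite (range (\<lambda>n. hyp_image (\<Phi> n) H))"
proof -
  have "range (\<lambda>n. hyp_image (\<Phi> n) H) = (\<lambda>n. hyp_image (\<Phi> n) H) ` {0..<\<bar>m\<bar>}"
    using assms(1) by (rule periodic_int_range) (simp add: hyp_image_\<Phi>_add[symmetric] assms(2))
  then show ?thesis by simp
qed

lemma periodic_hyperplane_cobounded:
  assumes H: "H \<in> hyperplanes adj Y" and m: "m \<noteq> 0" "hyp_image (\<Phi> m) H = H"
  obtains R where "\<And>y. y \<in> Y \<Longrightarrow> \<exists>c\<in>carrier H. d y c \<le> R"
proof -
  obtain e where e: "e \<in> edges_in adj Y" "H = dual_hyp Y e"
    using H mem_hyperplanes_iff by blast
  let ?orbit = "range (\<lambda>n. hyp_image (\<Phi> n) H)"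
  have "\<exists>R. \<forall>H'\<in>?orbit. \<exists>c\<in>carrier H'. d x0 c \<le> R"
  proof (rule finite_uniform_bound[OF periodic_hyperplane_finite_orbit[OF m]])
    fix H' assume "H' \<in> ?orbit"
    then obtain n where "H' = hyp_image (\<Phi> n) H" by blast
    then have "\<Phi> n (fst e) \<in> carrier H'"
      using fst_in_carrier_dual_hyp[OF e(1)] e(2) by (simp add: carrier_hyp_image)
    then show "\<exists>R. \<exists>c\<in>carrier H'. d x0 c \<le> R" by blast
  qed (use order_trans in blast)
  then obtain R where R: "\<And>H'. H' \<in> ?orbit \<Longrightarrow> \<exists>c\<in>carrier H'. d x0 c \<le> R" by blast
  have "\<exists>c\<in>carrier H. d y c \<le> cobound + R" if y: "y \<in> Y" for y
  proof -
    obtain n where n: "d y (\<Phi> n x0) \<le> cobound" using near_orbit[OF y] by blast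
    obtain c' where c': "c' \<in> carrier (hyp_image (\<Phi> (- n)) H)" "d x0 c' \<le> R" using R by blast
    then obtain c where c: "c \<in> carrier H" "c' = \<Phi> (- n) c" by (auto simp: carrier_hyp_image)
    have "d (\<Phi> n x0) c = d x0 c'" using gdist_\<Phi>[of n x0 c'] c(2) by (simp add: \<Phi>_apply_neg)
    then have "d y c \<le> cobound + R" using c'(2) n gdist_triangle[of y c "\<Phi> n x0"] by linarith
    then show ?thesis using c(1) by blast
  qed
  then show ?thesis using that by blast
qed

lemma cobounded_imp_trivial:
  assumes "\<And>y. y \<in> Y \<Longrightarrow> \<exists>c\<in>carrier H. d y c \<le> R"
  shows "trivial_hyp adj Y H"
  unfolding trivial_hyp_def deep_def
proof (intro ballI notI)
  fix S assume S: "S \<in> halfspaces adj Y H" and "\<forall>R. \<exists>z\<in>S. \<forall>c\<in>carrier H. R \<le> d z c"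
  then obtain z where z: "z \<in> S" "\<forall>c\<in>carrier H. Suc R \<le> d z c" by blast
  have "z \<in> Y" using z(1) S halfspace_subset unfolding halfspaces_def by blast
  then show False using assms z(2) by fastforce
qed

lemma trivial_imp_cobounded:
  assumes H: "H \<in> hyperplanes adj Y" and "trivial_hyp adj Y H"
  obtains R where "\<And>y. y \<in> Y \<Longrightarrow> \<exists>c\<in>carrier H. d y c \<le> R"
proof -
  obtain e where e: "e \<in> edges_in adj Y" "H = dual_hyp Y e"
    using H mem_hyperplanes_iff by blast
  have "\<not> deep adj (halfspace adj Y e) H" "\<not> deep adj (halfspace adj Y (prod.swap e)) H"
    using assms(2) halfspaces_dual_hyp[OF e(1)] e(2) unfolding trivial_hyp_def by auto
  then obtain R1 R2 where
    "\<forall>z\<in>halfspace adj Y e. \<exists>c\<in>carrier H. d z c < R1"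
    "\<forall>z\<in>halfspace adj Y (prod.swap e). \<exists>c\<in>carrier H. d z c < R2"
    unfolding deep_def by (auto simp: not_le)
  then have "\<exists>c\<in>carrier H. d y c \<le> R1 + R2" if "y \<in> Y" for y
    using that halfspace_swap[OF e(1)] by (cases "y \<in> halfspace adj Y e") force+
  then show ?thesis using that by blast
qed

lemma trivial_iff_unbounded_carrier:
  assumes H: "H \<in> hyperplanes adj Y"
  shows "trivial_hyp adj Y H \<longleftrightarrow> \<not> bounded_set (carrier H)"
proof
  assume "trivial_hyp adj Y H"
  then obtain R where R: "\<And>y. y \<in> Y \<Longrightarrow> \<exists>c\<in>carrier H. d y c \<le> R"
    using trivial_imp_cobounded[OF H] by blast
  show "\<not> bounded_set (carrier H)"
  proof
    assume "bounded_set (carrier H)"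
    then obtain R' where R': "\<And>c. c \<in> carrier H \<Longrightarrow> d x0 c \<le> R'" unfolding bounded_set_def by blast
    have "d x0 y \<le> R' + R" if y: "y \<in> Y" for y
    proof -
      obtain c where "c \<in> carrier H" "d y c \<le> R" using R[OF y] by blast
      then show ?thesis using R'[of c] gdist_triangle[of x0 y c] gdist_commute[of c y] by linarith
    qed
    then show False using Y_unbounded unfolding bounded_set_def by blast
  qed
next
  assume "\<not> bounded_set (carrier H)"
  then obtain m where "m \<noteq> 0" "hyp_image (\<Phi> m) H = H"
    using unbounded_hyperplane_periodic[OF H] by blast
  then obtain R where "\<And>y. y \<in> Y \<Longrightarrow> \<exists>c\<in>carrier H. d y c \<le> R"
    using periodic_hyperplane_cobounded[OF H] by blast
  then show "trivial_hyp adj Y H" by (rule cobounded_imp_trivial)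
qed

lemma hyperplanes_uniform_bound:
  fixes Q :: "('v \<times> 'v) set \<Rightarrow> 'b::linorder \<Rightarrow> bool"
  assumes bound: "\<And>H. H \<in> hyperplanes adj Y \<Longrightarrow> \<exists>K. Q H K"
    and mono: "\<And>H K K'. Q H K \<Longrightarrow> K \<le> K' \<Longrightarrow> Q H K'"
    and invariant: "\<And>H n K. Q H K \<Longrightarrow> Q (hyp_image (\<Phi> n) H) K"
  shows "\<exists>K. \<forall>H\<in>hyperplanes adj Y. Q H K"
proof -
  have "dual_hyp Y e \<in> hyperplanes adj Y" if "e \<in> base_edges" for e
    using that mem_hyperplanes_iff unfolding base_edges_def by blast
  then have "\<exists>K. \<forall>e\<in>base_edges. Q (dual_hyp Y e) K"
    using finite_uniform_bound[OF finite_base_edges, of "\<lambda>e. Q (dual_hyp Y e)"] bound mono by blast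
  then obtain K where K: "\<And>e. e \<in> base_edges \<Longrightarrow> Q (dual_hyp Y e) K" by blast
  have "Q H K" if "H \<in> hyperplanes adj Y" for H
    by (rule hyperplane_translate_of_base[OF that]) (simp add: K invariant)
  then show ?thesis by blast
qed

lemma bounded_set_diam_le:
  assumes "bounded_set S" obtains D where "diam_le adj S D"
proof -
  obtain R where R: "\<And>x. x \<in> S \<Longrightarrow> d x0 x \<le> R" using assms unfolding bounded_set_def by blast
  have "d x y \<le> R + R" if "x \<in> S" "y \<in> S" for x y
    using R[OF that(1)] R[OF that(2)] gdist_triangle[of x y x0] gdist_commute[of x x0] by linarith
  then show ?thesis using that diam_le_of_nat by blast
qed

lemma nontrivial_carrier_bounded:
  "\<exists>D. \<forall>D'\<ge>D. \<forall>H\<in>hyperplanes adj Y. \<not> trivial_hyp adj Y H \<longrightarrow> diam_le adj (carrier H) D'"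
proof -
  have "\<exists>D. \<forall>H\<in>hyperplanes adj Y. \<not> trivial_hyp adj Y H \<longrightarrow> diam_le adj (carrier H) D"
  proof (rule hyperplanes_uniform_bound)
    fix H assume "H \<in> hyperplanes adj Y"
    then show "\<exists>D. \<not> trivial_hyp adj Y H \<longrightarrow> diam_le adj (carrier H) D"
      using trivial_iff_unbounded_carrier bounded_set_diam_le by blast
  next
    fix H n D
    assume "\<not> trivial_hyp adj Y H \<longrightarrow> diam_le adj (carrier H) D"
    then show "\<not> trivial_hyp adj Y (hyp_image (\<Phi> n) H) \<longrightarrow> diam_le adj (carrier (hyp_image (\<Phi> n) H)) D"
      by (simp add: trivial_hyp_image[OF graph_aut_\<Phi> \<Phi>_Y] carrier_hyp_image diam_le_graph_aut[OF graph_aut_\<Phi>])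
  qed (use diam_le_mono in blast)
  then show ?thesis using diam_le_mono by blast
qed

lemma shallow_halfspace_bounded:
  assumes "bounded_set (carrier H)" "\<not> deep adj S H"
  shows "bounded_set S"
proof -
  obtain R where R: "\<And>c. c \<in> carrier H \<Longrightarrow> d x0 c \<le> R" using assms(1) unfolding bounded_set_def by blast
  obtain R' where R': "\<And>z. z \<in> S \<Longrightarrow> \<exists>c\<in>carrier H. d z c < R'"
    using assms(2) unfolding deep_def by (auto simp: not_le)
  have "d x0 z \<le> R + R'" if z: "z \<in> S" for z
  proof -
    obtain c where "c \<in> carrier H" "d z c < R'" using R'[OF z] by blast
    then show ?thesis using R[of c] gdist_triangle[of x0 z c] gdist_commute[of z c] by linarith
  qed
  then show ?thesis unfolding bounded_set_def by blast
qed

lemma shallow_halfspaces_bounded: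
  "\<exists>K. \<forall>K'\<ge>K. \<forall>H\<in>hyperplanes adj Y. half_essential_hyp adj Y H \<longrightarrow>
     (\<forall>S\<in>halfspaces adj Y H. \<not> deep adj S H \<longrightarrow> diam_le adj S K')"
proof -
  have "\<exists>K. \<forall>H\<in>hyperplanes adj Y. half_essential_hyp adj Y H \<longrightarrow>
     (\<forall>S\<in>halfspaces adj Y H. \<not> deep adj S H \<longrightarrow> diam_le adj S K)"
  proof (rule hyperplanes_uniform_bound)
    fix H assume H: "H \<in> hyperplanes adj Y"
    show "\<exists>K. half_essential_hyp adj Y H \<longrightarrow>
        (\<forall>S\<in>halfspaces adj Y H. \<not> deep adj S H \<longrightarrow> diam_le adj S K)"
    proof (cases "half_essential_hyp adj Y H")
      case True
      then have "bounded_set (carrier H)"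
        using trivial_iff_unbounded_carrier[OF H] unfolding half_essential_hyp_def trivial_hyp_def by blast
      then have "\<exists>K. \<not> deep adj S H \<longrightarrow> diam_le adj S K" for S
        using shallow_halfspace_bounded bounded_set_diam_le by blast
      moreover have "finite (halfspaces adj Y H)" using H mem_hyperplanes_iff halfspaces_dual_hyp by auto
      ultimately show ?thesis
        using finite_uniform_bound[of "halfspaces adj Y H" "\<lambda>S K. \<not> deep adj S H \<longrightarrow> diam_le adj S K"]
          diam_le_mono by force
    qed simp
  next
    fix H n K
    assume "half_essential_hyp adj Y H \<longrightarrow> (\<forall>S\<in>halfspaces adj Y H. \<not> deep adj S H \<longrightarrow> diam_le adj S K)"
    then show "half_essential_hyp adj Y (hyp_image (\<Phi> n) H) \<longrightarrow>
        (\<forall>S\<in>halfspaces adj Y (hyp_image (\<Phi> n) H). \<not> deep adj S (hyp_image (\<Phi> n) H) \<longrightarrow> diam_le adj S K)"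
      by (auto simp: half_essential_hyp_image[OF graph_aut_\<Phi> \<Phi>_Y] halfspaces_hyp_image[OF graph_aut_\<Phi> \<Phi>_Y]
          deep_hyp_image[OF graph_aut_\<Phi>] diam_le_graph_aut[OF graph_aut_\<Phi>])
  qed (use diam_le_mono in blast)
  then show ?thesis using diam_le_mono by blast
qed

lemma finite_trivial_hyperplanes: "finite {H \<in> hyperplanes adj Y. trivial_hyp adj Y H}"
proof -
  define T where "T = {e \<in> base_edges. trivial_hyp adj Y (dual_hyp Y e)}"
  have hyp: "dual_hyp Y e \<in> hyperplanes adj Y" if "e \<in> base_edges" for e
    using that mem_hyperplanes_iff unfolding base_edges_def by blast
  have "{H \<in> hyperplanes adj Y. trivial_hyp adj Y H} \<subseteq> (\<Union>e\<in>T. range (\<lambda>n. hyp_image (\<Phi> n) (dual_hyp Y e)))"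
  proof
    fix H assume "H \<in> {H \<in> hyperplanes adj Y. trivial_hyp adj Y H}"
    then have H: "H \<in> hyperplanes adj Y" "trivial_hyp adj Y H" by auto
    obtain n e where e: "e \<in> base_edges" "H = hyp_image (\<Phi> n) (dual_hyp Y e)"
      by (rule hyperplane_translate_of_base[OF H(1)])
    then have "e \<in> T"
      using H(2) unfolding T_def by (simp add: trivial_hyp_image[OF graph_aut_\<Phi> \<Phi>_Y])
    with e(2) show "H \<in> (\<Union>e\<in>T. range (\<lambda>n. hyp_image (\<Phi> n) (dual_hyp Y e)))" by blast
  qed
  moreover have "finite (\<Union>e\<in>T. range (\<lambda>n. hyp_image (\<Phi> n) (dual_hyp Y e)))"
  proof (rule finite_UN_I)
    show "finite T" unfolding T_def using finite_base_edges by simp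
    fix e assume "e \<in> T"
    then have e: "dual_hyp Y e \<in> hyperplanes adj Y" "trivial_hyp adj Y (dual_hyp Y e)"
      using hyp unfolding T_def by auto
    then have "\<not> bounded_set (carrier (dual_hyp Y e))" using trivial_iff_unbounded_carrier by blast
    then obtain m where "m \<noteq> 0" "hyp_image (\<Phi> m) (dual_hyp Y e) = dual_hyp Y e"
      by (rule unbounded_hyperplane_periodic[OF e(1)])
    then show "finite (range (\<lambda>n. hyp_image (\<Phi> n) (dual_hyp Y e)))"
      by (rule periodic_hyperplane_finite_orbit)
  qed
  ultimately show ?thesis by (rule finite_subset)
qed

lemma translates_same_side:
  assumes e: "e \<in> edges_in adj Y" and b: "b \<in> Y" "\<And>n. d b (\<Phi> n b) = d x0 (\<Phi> n x0)"
    and near: "\<And>c. c \<in> carrier (dual_hyp Y e) \<Longrightarrow> d b c \<le> R0"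
    and far: "R0 + d x0 (\<phi> x0) < d x0 (\<Phi> i x0)"
  shows "\<Phi> i b \<in> halfspace adj Y e \<longleftrightarrow> \<Phi> (i + 1) b \<in> halfspace adj Y e"
proof (rule same_halfspace_if_close[OF convex_Y e \<Phi>_in_Y[OF b(1)] \<Phi>_in_Y[OF b(1)]])
  fix c assume c: "c \<in> carrier (dual_hyp Y e)"
  have "d (\<Phi> i b) (\<Phi> (i + 1) b) = d x0 (\<phi> x0)"
    using gdist_\<Phi>[of i b "\<Phi> 1 b"] b(2)[of 1] \<Phi>_add[of i 1 b] by simp
  moreover have "d b (\<Phi> i b) \<le> d b c + d c (\<Phi> i b)" by (rule gdist_triangle)
  ultimately show "d (\<Phi> i b) (\<Phi> (i + 1) b) < d (\<Phi> i b) c"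
    using near[OF c] far b(2)[of i] gdist_commute[of c "\<Phi> i b"] by linarith
qed

lemma deep_halfspace_far_translate:
  assumes e: "e \<in> edges_in adj Y" and S: "S \<in> halfspaces adj Y (dual_hyp Y e)" "deep adj S (dual_hyp Y e)"
    and b: "b \<in> Y" "\<And>n. d b (\<Phi> n b) = d x0 (\<Phi> n x0)" "\<And>y. y \<in> Y \<Longrightarrow> \<exists>n. d y (\<Phi> n b) \<le> cobound"
    and near: "\<And>c. c \<in> carrier (dual_hyp Y e) \<Longrightarrow> d b c \<le> R0"
  obtains n where "N \<le> \<bar>n\<bar>" "\<Phi> n b \<in> S"
proof -
  obtain M where M: "\<And>n. \<bar>n\<bar> < N \<Longrightarrow> d x0 (\<Phi> n x0) \<le> M"
    using short_translations_bounded by blast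
  obtain f where f: "f \<in> dual_hyp Y e" "S = halfspace adj Y f" using S(1) unfolding halfspaces_def by blast
  have fe: "f \<in> edges_in adj Y" "dual_hyp Y f = dual_hyp Y e"
    using f(1) dual_hyp_eq[OF e] unfolding dual_hyp_def by auto
  obtain z where z: "z \<in> S" "\<And>c. c \<in> carrier (dual_hyp Y e) \<Longrightarrow> cobound + R0 + M + 1 \<le> d z c"
    using S(2) unfolding deep_def by blast
  have "z \<in> Y" using z(1) f(2) halfspace_subset by blast
  then obtain n where n: "d z (\<Phi> n b) \<le> cobound" using b(3) by blast
  have "z \<in> S \<longleftrightarrow> \<Phi> n b \<in> S"
    unfolding f(2) using z(2) n fe(2)
    by (intro same_halfspace_if_close[OF convex_Y fe(1) \<open>z \<in> Y\<close> \<Phi>_in_Y[OF b(1)]]) fastforce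
  moreover have "N \<le> \<bar>n\<bar>"
  proof (rule ccontr)
    assume "\<not> N \<le> \<bar>n\<bar>"
    then have "d b (\<Phi> n b) \<le> M" using M b(2) by simp
    moreover have "d z (fst e) \<le> d z (\<Phi> n b) + d (\<Phi> n b) b + d b (fst e)"
      using gdist_triangle[of z "fst e" "\<Phi> n b"] gdist_triangle[of "\<Phi> n b" "fst e" b] by linarith
    moreover have "d b (fst e) \<le> R0" "cobound + R0 + M + 1 \<le> d z (fst e)"
      using near z(2) fst_in_carrier_dual_hyp[OF e] by auto
    ultimately show False using n gdist_commute[of b "\<Phi> n b"] by linarith
  qed
  ultimately show ?thesis using that z(1) by blast
qed

lemma translate_tails:
  assumes e: "e \<in> edges_in adj Y" and b: "b \<in> Y" "\<And>n. d b (\<Phi> n b) = d x0 (\<Phi> n x0)"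
    and near: "\<And>c. c \<in> carrier (dual_hyp Y e) \<Longrightarrow> d b c \<le> R0"
    and N: "\<And>n. N \<le> \<bar>n\<bar> \<Longrightarrow> R0 + d x0 (\<phi> x0) < d x0 (\<Phi> n x0)"
  shows "N \<le> n \<Longrightarrow> \<Phi> n b \<in> halfspace adj Y e \<longleftrightarrow> \<Phi> N b \<in> halfspace adj Y e"
    and "n \<le> - N \<Longrightarrow> \<Phi> n b \<in> halfspace adj Y e \<longleftrightarrow> \<Phi> (- N) b \<in> halfspace adj Y e"
proof -
  let ?A = "halfspace adj Y e"
  have next_same: "\<Phi> i b \<in> ?A \<longleftrightarrow> \<Phi> (i + 1) b \<in> ?A" if "N \<le> \<bar>i\<bar>" for i
    using translates_same_side[OF e b near N[OF that]] .
  show "\<Phi> n b \<in> ?A \<longleftrightarrow> \<Phi> N b \<in> ?A" if "N \<le> n"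
    using that
  proof (induction n rule: int_ge_induct)
    case (step i)
    then have "N \<le> \<bar>i\<bar>" by arith
    then show ?case using next_same step.IH by blast
  qed simp
  show "\<Phi> n b \<in> ?A \<longleftrightarrow> \<Phi> (- N) b \<in> ?A" if "n \<le> - N"
    using that
  proof (induction n rule: int_le_induct)
    case (step i)
    then have "N \<le> \<bar>i - 1\<bar>" by arith
    then show ?case using next_same[of "i - 1"] step.IH by simp
  qed simp
qed

text \<open>Far from the carrier, consecutive translates lie on the same side, so each tail of the
  orbit stays in one halfspace; as both halfspaces are deep, the two tails lie on opposite sides.\<close>
lemma translate_tails_opposite:
  assumes e: "e \<in> edges_in adj Y" and ess: "essential_hyp adj Y (dual_hyp Y e)"
    and b: "b \<in> Y" "\<And>n. d b (\<Phi> n b) = d x0 (\<Phi> n x0)" "\<And>y. y \<in> Y \<Longrightarrow> \<exists>n. d y (\<Phi> n b) \<le> cobound"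
    and near: "\<And>c. c \<in> carrier (dual_hyp Y e) \<Longrightarrow> d b c \<le> R0"
    and N: "\<And>n. N \<le> \<bar>n\<bar> \<Longrightarrow> R0 + d x0 (\<phi> x0) < d x0 (\<Phi> n x0)"
  shows "\<Phi> N b \<in> halfspace adj Y e \<longleftrightarrow> \<Phi> (- N) b \<notin> halfspace adj Y e"
proof -
  let ?A = "halfspace adj Y e"
  have tails: "(\<Phi> n b \<in> ?A \<longleftrightarrow> \<Phi> N b \<in> ?A) \<or> (\<Phi> n b \<in> ?A \<longleftrightarrow> \<Phi> (- N) b \<in> ?A)"
    if "N \<le> \<bar>n\<bar>" for n
  proof (cases "N \<le> n")
    case True
    then show ?thesis using translate_tails(1)[OF e b(1,2) near N] by blast
  next
    case False
    then have "n \<le> - N" using that by arith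
    then show ?thesis using translate_tails(2)[OF e b(1,2) near N] by blast
  qed
  have deep: "deep adj ?A (dual_hyp Y e)" "deep adj (halfspace adj Y (prod.swap e)) (dual_hyp Y e)"
    and halfspaces: "?A \<in> halfspaces adj Y (dual_hyp Y e)"
      "halfspace adj Y (prod.swap e) \<in> halfspaces adj Y (dual_hyp Y e)"
    using ess halfspaces_dual_hyp[OF e] unfolding essential_hyp_def by auto
  obtain nA where nA: "N \<le> \<bar>nA\<bar>" "\<Phi> nA b \<in> ?A"
    by (rule deep_halfspace_far_translate[OF e halfspaces(1) deep(1) b near])
  obtain nB where nB: "N \<le> \<bar>nB\<bar>" "\<Phi> nB b \<in> halfspace adj Y (prod.swap e)"
    by (rule deep_halfspace_far_translate[OF e halfspaces(2) deep(2) b near])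
  then have "\<Phi> nB b \<notin> ?A" using halfspace_swap[OF e] by simp
  then show ?thesis using tails[OF nA(1)] tails[OF nB(1)] nA(2) by blast
qed

lemma essential_hyperplane_orientation:
  assumes e: "e \<in> edges_in adj Y" and ess: "essential_hyp adj Y (dual_hyp Y e)"
    and b: "b \<in> Y" "\<And>n. d b (\<Phi> n b) = d x0 (\<Phi> n x0)" "\<And>y. y \<in> Y \<Longrightarrow> \<exists>n. d y (\<Phi> n b) \<le> cobound"
    and near: "\<And>c. c \<in> carrier (dual_hyp Y e) \<Longrightarrow> d b c \<le> R0"
    and N: "\<And>n. N \<le> \<bar>n\<bar> \<Longrightarrow> R0 + d x0 (\<phi> x0) < d x0 (\<Phi> n x0)"
  obtains e' where "e' \<in> edges_in adj Y" "dual_hyp Y e' = dual_hyp Y e"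
    "\<And>n. N \<le> n \<Longrightarrow> \<Phi> n b \<in> halfspace adj Y e'"
    "\<And>n. n \<le> - N \<Longrightarrow> \<Phi> n b \<in> halfspace adj Y (prod.swap e')"
proof -
  let ?A = "halfspace adj Y e"
  have pos: "\<Phi> n b \<in> ?A \<longleftrightarrow> \<Phi> N b \<in> ?A" if "N \<le> n" for n
    by (rule translate_tails(1)[OF e b(1,2) near N that])
  have neg: "\<Phi> n b \<in> ?A \<longleftrightarrow> \<Phi> (- N) b \<in> ?A" if "n \<le> - N" for n
    by (rule translate_tails(2)[OF e b(1,2) near N that])
  have opposite: "\<Phi> N b \<in> ?A \<longleftrightarrow> \<Phi> (- N) b \<notin> ?A"
    by (rule translate_tails_opposite[OF e ess b near N])
  have other_side: "\<Phi> n b \<in> halfspace adj Y (prod.swap e) \<longleftrightarrow> \<Phi> n b \<notin> ?A" for n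
    using halfspace_swap[OF e] \<Phi>_in_Y[OF b(1)] by blast
  show ?thesis
  proof (cases "\<Phi> N b \<in> ?A")
    case True
    show ?thesis
    proof (rule that[OF e refl])
      fix n assume "N \<le> n"
      then show "\<Phi> n b \<in> ?A" using pos True by blast
    next
      fix n assume "n \<le> - N"
      then show "\<Phi> n b \<in> halfspace adj Y (prod.swap e)" using neg True opposite other_side[of n] by blast
    qed
  next
    case False
    show ?thesis
    proof (rule that[OF swap_edges_in[OF e] dual_hyp_swap[OF e]])
      fix n assume "N \<le> n"
      then show "\<Phi> n b \<in> halfspace adj Y (prod.swap e)" using pos False other_side[of n] by blast
    next
      fix n assume "n \<le> - N"
      then show "\<Phi> n b \<in> halfspace adj Y (prod.swap (prod.swap e))"
        using neg[OF \<open>n \<le> - N\<close>] False opposite by simp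
    qed
  qed
qed

lemma translate_carrier_in_halfspace:
  assumes e: "e \<in> edges_in adj Y" and b: "b \<in> Y" "d b (\<Phi> t b) = d x0 (\<Phi> t x0)"
    and near: "\<And>c. c \<in> carrier (dual_hyp Y e) \<Longrightarrow> d b c \<le> R0"
    and side: "\<Phi> t b \<in> halfspace adj Y e" and far: "2 * R0 < d x0 (\<Phi> t x0)"
    and c: "c \<in> carrier (hyp_image (\<Phi> t) (dual_hyp Y e))"
  shows "c \<in> halfspace adj Y e"
proof (rule ccontr)
  assume "c \<notin> halfspace adj Y e"
  obtain c1 where c1: "c1 \<in> carrier (dual_hyp Y e)" "c = \<Phi> t c1"
    using c by (auto simp: carrier_hyp_image)
  then have "c \<in> Y" using carrier_dual_hyp_subset \<Phi>_in_Y by blast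
  with \<open>c \<notin> halfspace adj Y e\<close> obtain c' where c': "c' \<in> carrier (dual_hyp Y e)" "c' \<in> interval adj (\<Phi> t b) c"
    using interval_meets_carrier[OF convex_Y e side] by blast
  have "d (\<Phi> t b) c' \<le> d (\<Phi> t b) c" using c'(2) unfolding mem_interval by linarith
  also have "\<dots> \<le> R0" using near[OF c1(1)] c1(2) gdist_\<Phi> by simp
  finally have "d (\<Phi> t b) c' \<le> R0" .
  then show False
    using near[OF c'(1)] b(2) far gdist_triangle[of b "\<Phi> t b" c'] gdist_commute[of c' "\<Phi> t b"] by linarith
qed

lemma translate_not_intersect:
  assumes e: "e \<in> edges_in adj Y" and b: "b \<in> Y" "\<And>n. d b (\<Phi> n b) = d x0 (\<Phi> n x0)"
    and near: "\<And>c. c \<in> carrier (dual_hyp Y e) \<Longrightarrow> d b c \<le> R0"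
    and sides: "\<Phi> t b \<in> halfspace adj Y e" "\<Phi> s b \<in> halfspace adj Y (prod.swap e)"
      "\<Phi> (s - t) b \<in> halfspace adj Y (prod.swap e)"
    and far: "2 * R0 < d x0 (\<Phi> t x0)"
  shows "\<not> hyp_intersect adj Y (dual_hyp Y e) (hyp_image (\<Phi> t) (dual_hyp Y e))"
proof -
  let ?e' = "map_prod (\<Phi> t) (\<Phi> t) e"
  have e': "?e' \<in> edges_in adj Y" using e edges_in_graph_aut[OF graph_aut_\<Phi> \<Phi>_Y] by simp
  have in_A: "c \<in> halfspace adj Y e" if "c \<in> carrier (dual_hyp Y ?e')" for c
    using translate_carrier_in_halfspace[OF e b(1) b(2) near sides(1) far] that
    unfolding hyp_image_\<Phi>_dual_hyp by blast
  have "fst e \<notin> carrier (dual_hyp Y ?e')"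
  proof
    assume "fst e \<in> carrier (dual_hyp Y ?e')"
    then obtain c1 where "c1 \<in> carrier (dual_hyp Y e)" "fst e = \<Phi> t c1"
      unfolding hyp_image_\<Phi>_dual_hyp[symmetric] by (auto simp: carrier_hyp_image)
    then have "d (\<Phi> t b) (fst e) \<le> R0" using near gdist_\<Phi> by simp
    then show False using near[OF fst_in_carrier_dual_hyp[OF e]] b(2)[of t] far
        gdist_triangle[of b "\<Phi> t b" "fst e"] gdist_commute[of "fst e" "\<Phi> t b"] by linarith
  qed
  then have "dual_hyp Y e \<noteq> dual_hyp Y ?e'" using fst_in_carrier_dual_hyp[OF e] by auto
  moreover have "\<not> crosses adj Y (dual_hyp Y e) (dual_hyp Y ?e')"
  proof
    assume "crosses adj Y (dual_hyp Y e) (dual_hyp Y ?e')"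
    then obtain z where z: "z \<in> halfspace adj Y (prod.swap e)" "z \<in> halfspace adj Y ?e'"
      unfolding crosses_def halfspaces_dual_hyp[OF e] halfspaces_dual_hyp[OF e'] by blast
    have "\<Phi> s b = \<Phi> t (\<Phi> (s - t) b)" using \<Phi>_add[of t "s - t" b] by simp
    then have "\<Phi> s b \<in> halfspace adj Y (prod.swap ?e')"
      using sides(3) halfspace_graph_aut[OF graph_aut_\<Phi> \<Phi>_Y, of t "prod.swap e"]
      by (simp add: map_prod_def prod.swap_def split_def)
    then obtain c where c: "c \<in> carrier (dual_hyp Y ?e')" "c \<in> interval adj z (\<Phi> s b)"
      using interval_meets_carrier[OF convex_Y e' z(2)] halfspace_swap[OF e'] by blast
    have "c \<in> halfspace adj Y (prod.swap e)"
      by (rule halfspace_convex[OF convex_Y swap_edges_in[OF e] z(1) sides(2) c(2)])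
    then show False using in_A[OF c(1)] halfspace_swap[OF e] by simp
  qed
  ultimately show ?thesis unfolding hyp_intersect_def hyp_image_\<Phi>_dual_hyp by blast
qed

lemma crossing_carrier_near:
  assumes H: "H \<in> hyperplanes adj Y" and H'': "H'' \<in> hyperplanes adj Y" and cr: "crosses adj Y H'' H"
    and near: "\<And>c. c \<in> carrier H \<Longrightarrow> d p c \<le> R"
  obtains c where "c \<in> carrier H''" "d p c \<le> 3 * R"
proof -
  obtain e f where "e \<in> edges_in adj Y" "H'' = dual_hyp Y e" "f \<in> edges_in adj Y" "H = dual_hyp Y f"
    using H H'' mem_hyperplanes_iff by metis
  then obtain c1 c2 c where c: "c1 \<in> carrier H" "c2 \<in> carrier H" "c \<in> carrier H''" "c \<in> interval adj c1 c2"
    using crosses_carrier_between[OF convex_Y] cr by metis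
  have "d p c \<le> d p c1 + d c1 c2" using c(4) gdist_triangle[of p c c1] unfolding mem_interval by linarith
  also have "\<dots> \<le> d p c1 + (d c1 p + d p c2)" using gdist_triangle[of c1 c2 p] by linarith
  also have "\<dots> \<le> 3 * R" using near[OF c(1)] near[OF c(2)] gdist_commute[of c1 p] by linarith
  finally show ?thesis using that c(3) by blast
qed

lemma crossing_far_translates_trivial:
  assumes H: "H \<in> hyperplanes adj Y" and H'': "H'' \<in> hyperplanes adj Y"
    and near: "\<And>c. c \<in> carrier H \<Longrightarrow> d b c \<le> R0"
    and D: "\<not> trivial_hyp adj Y H'' \<Longrightarrow> diam_le adj (carrier H'') (real D)"
    and far: "6 * R0 + D < d b (\<Phi> t b)"
    and cr: "crosses adj Y H'' H" "crosses adj Y H'' (hyp_image (\<Phi> t) H)"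
  shows "trivial_hyp adj Y H''"
proof (rule ccontr)
  assume "\<not> trivial_hyp adj Y H''"
  obtain c where c: "c \<in> carrier H''" "d b c \<le> 3 * R0"
    by (rule crossing_carrier_near[OF H H'' cr(1) near])
  have "hyp_image (\<Phi> t) H \<in> hyperplanes adj Y"
    using H mem_hyperplanes_iff hyp_image_\<Phi>_dual_hyp edges_in_graph_aut[OF graph_aut_\<Phi> \<Phi>_Y] by metis
  moreover have "d (\<Phi> t b) c \<le> R0" if "c \<in> carrier (hyp_image (\<Phi> t) H)" for c
    using that near gdist_\<Phi> by (auto simp: carrier_hyp_image)
  ultimately obtain c' where c': "c' \<in> carrier H''" "d (\<Phi> t b) c' \<le> 3 * R0"
    using crossing_carrier_near[OF _ H'' cr(2)] by blast
  have "d c c' \<le> D" using D \<open>\<not> trivial_hyp adj Y H''\<close> c(1) c'(1) unfolding diam_le_def by auto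
  then show False
    using c(2) c'(2) far gdist_triangle[of b "\<Phi> t b" c] gdist_triangle[of c "\<Phi> t b" c']
      gdist_commute[of c' "\<Phi> t b"] by linarith
qed

lemma essential_translate_separated:
  assumes H: "H \<in> hyperplanes adj Y" and ess: "essential_hyp adj Y H"
    and D: "\<And>H. H \<in> hyperplanes adj Y \<Longrightarrow> \<not> trivial_hyp adj Y H \<Longrightarrow> diam_le adj (carrier H) (real D)"
    and N: "0 \<le> N" "\<And>n. N \<le> \<bar>n\<bar> \<Longrightarrow> cobound + D + d x0 (\<phi> x0) < d x0 (\<Phi> n x0)"
    and t: "N \<le> t" "6 * (cobound + D) + D < d x0 (\<Phi> t x0)"
  shows "\<not> hyp_intersect adj Y H (hyp_image (\<Phi> t) H) \<and>
    (\<forall>H''\<in>hyperplanes adj Y. crosses adj Y H'' H \<and> crosses adj Y H'' (hyp_image (\<Phi> t) H)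
      \<longrightarrow> trivial_hyp adj Y H'')"
proof -
  define R0 where "R0 = cobound + D"
  obtain e where e: "e \<in> edges_in adj Y" "H = dual_hyp Y e" using H mem_hyperplanes_iff by blast
  have "\<not> trivial_hyp adj Y H"
    using ess halfspaces_dual_hyp[OF e(1)] e(2) unfolding essential_hyp_def trivial_hyp_def by auto
  then have diam: "d c c' \<le> D" if "c \<in> carrier H" "c' \<in> carrier H" for c c'
    using D[OF H] that unfolding diam_le_def by auto
  obtain k where k: "d (fst e) (\<Phi> k x0) \<le> cobound" using near_orbit edges_inD[OF e(1)] by blast
  define b where "b = \<Phi> k x0"
  have b: "b \<in> Y" "\<And>n. d b (\<Phi> n b) = d x0 (\<Phi> n x0)" "\<And>y. y \<in> Y \<Longrightarrow> \<exists>n. d y (\<Phi> n b) \<le> cobound"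
    unfolding b_def by (rule \<Phi>_in_Y[OF x0_in_Y], rule \<Phi>_displacement, rule near_orbit_of)
  have near: "d b c \<le> R0" if "c \<in> carrier H" for c
  proof -
    have "d (fst e) c \<le> D" using diam fst_in_carrier_dual_hyp[OF e(1)] that e(2) by simp
    then show ?thesis using k gdist_triangle[of b c "fst e"] gdist_commute[of b "fst e"]
      unfolding R0_def b_def by linarith
  qed
  obtain e' where e': "e' \<in> edges_in adj Y" "dual_hyp Y e' = H"
    "\<And>n. N \<le> n \<Longrightarrow> \<Phi> n b \<in> halfspace adj Y e'"
    "\<And>n. n \<le> - N \<Longrightarrow> \<Phi> n b \<in> halfspace adj Y (prod.swap e')"
    using essential_hyperplane_orientation[OF e(1) ess[unfolded e(2)] b near[unfolded e(2)] N(2)[folded R0_def]]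
      e(2) by metis
  have "\<Phi> t b \<in> halfspace adj Y e'" "\<Phi> (- N) b \<in> halfspace adj Y (prod.swap e')"
    "\<Phi> (- N - t) b \<in> halfspace adj Y (prod.swap e')"
    using e'(3)[of t] e'(4)[of "- N"] e'(4)[of "- N - t"] t(1) N(1) by simp_all
  then have "\<not> hyp_intersect adj Y H (hyp_image (\<Phi> t) H)"
    using translate_not_intersect[OF e'(1) b(1,2) near[unfolded e'(2)[symmetric]]] t(2) e'(2)
    unfolding R0_def by simp
  moreover have "trivial_hyp adj Y H''"
    if "H'' \<in> hyperplanes adj Y" "crosses adj Y H'' H" "crosses adj Y H'' (hyp_image (\<Phi> t) H)" for H''
  proof -
    have far: "6 * R0 + D < d b (\<Phi> t b)" using b(2)[of t] t(2) unfolding R0_def by simp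
    show ?thesis by (rule crossing_far_translates_trivial[OF H that(1) near D[OF that(1)] far that(2,3)])
  qed
  ultimately show ?thesis by blast
qed

lemma essential_translates_separated:
  "\<exists>d0::int. \<forall>t\<ge>d0. \<forall>H\<in>hyperplanes adj Y. essential_hyp adj Y H \<longrightarrow>
     \<not> hyp_intersect adj Y H (hyp_image (\<Phi> t) H) \<and>
     (\<forall>H''\<in>hyperplanes adj Y. crosses adj Y H'' H \<and> crosses adj Y H'' (hyp_image (\<Phi> t) H)
        \<longrightarrow> trivial_hyp adj Y H'')"
proof -
  obtain D' where D': "\<forall>D''\<ge>D'. \<forall>H\<in>hyperplanes adj Y. \<not> trivial_hyp adj Y H \<longrightarrow> diam_le adj (carrier H) D''"
    using nontrivial_carrier_bounded by blast
  define D where "D = nat \<lceil>D'\<rceil>"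
  have D: "diam_le adj (carrier H) (real D)" if "H \<in> hyperplanes adj Y" "\<not> trivial_hyp adj Y H" for H
    using D' that real_nat_ceiling_ge[of D'] unfolding D_def by blast
  obtain N1 where N1: "0 \<le> N1" "\<And>n. N1 \<le> \<bar>n\<bar> \<Longrightarrow> cobound + D + d x0 (\<phi> x0) < d x0 (\<Phi> n x0)"
    using translations_diverge by blast
  obtain N2 where N2: "0 \<le> N2" "\<And>n. N2 \<le> \<bar>n\<bar> \<Longrightarrow> 6 * (cobound + D) + D < d x0 (\<Phi> n x0)"
    using translations_diverge by blast
  have "N1 \<le> t" "6 * (cobound + D) + D < d x0 (\<Phi> t x0)" if "N1 + N2 \<le> t" for t
    using that N1(1) N2 by auto
  then show ?thesis using essential_translate_separated[OF _ _ D N1] by blast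
qed
end

lemma cocompact_quasiline_of_cover:
  assumes cover: "univ_cover_of_compact_npc adj G" and ql: "quasiline adj G Y \<phi>" and "x0 \<in> Y"
  shows "cocompact_quasiline adj Y \<phi> x0"
proof unfold_locales
  show "graph_aut adj \<phi>" using cover ql unfolding univ_cover_of_compact_npc_def aut_group_def quasiline_def
    by blast
  show "\<phi> ` S \<noteq> S" if "finite S" "S \<noteq> {}" for S
    using cover ql that unfolding univ_cover_of_compact_npc_def acts_freely_def quasiline_def by blast
qed (use cover ql \<open>x0 \<in> Y\<close> in \<open>auto simp: univ_cover_of_compact_npc_def quasiline_def\<close>)

theorem lemma5p6:
  fixes adj :: "'v \<Rightarrow> 'v \<Rightarrow> bool" and G :: "('v \<Rightarrow> 'v) set"
    and Y :: "'v set" and \<phi> :: "'v \<Rightarrow> 'v"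
  assumes "univ_cover_of_compact_npc adj G"
    and "quasiline adj G Y \<phi>"
  shows "\<exists>(D::real) (K::real) (d::int).
    (\<forall>D'\<ge>D. \<forall>H\<in>hyperplanes adj Y.
        \<not> trivial_hyp adj Y H \<longrightarrow> diam_le adj (carrier H) D') \<and>
    (\<forall>K'\<ge>K. \<forall>H\<in>hyperplanes adj Y. half_essential_hyp adj Y H \<longrightarrow>
        (\<forall>W\<in>halfspaces adj Y H. \<not> deep adj W H \<longrightarrow> diam_le adj W K')) \<and>
    (\<forall>d'\<ge>d. \<forall>H\<in>hyperplanes adj Y. essential_hyp adj Y H \<longrightarrow>
        \<not> hyp_intersect adj Y H (hyp_image (fpow \<phi> d') H) \<and>
        (\<forall>H''\<in>hyperplanes adj Y.
            crosses adj Y H'' H \<and> crosses adj Y H'' (hyp_image (fpow \<phi> d') H)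
            \<longrightarrow> trivial_hyp adj Y H'')) \<and>
    finite {H \<in> hyperplanes adj Y. trivial_hyp adj Y H}"
proof (cases "Y = {}")
  case True
  then have "hyperplanes adj Y = {}" unfolding hyperplanes_def edges_in_def by simp
  then show ?thesis by simp
next
  case False
  then obtain x0 where "x0 \<in> Y" by blast
  interpret cocompact_quasiline adj Y \<phi> x0
    by (rule cocompact_quasiline_of_cover[OF assms \<open>x0 \<in> Y\<close>])
  show ?thesis
    using nontrivial_carrier_bounded shallow_halfspaces_bounded essential_translates_separated
      finite_trivial_hyperplanes by (elim exE) (intro exI conjI; assumption)
qed

end
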